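(* For every $J\subseteq[n-1]$, the zero loci of the sections $\phi_J$ of $U_J$ and $\psi_J$ of $V_J$ over $\mathrm{Pet}_n$ are $$Z(\phi_J)=X_J\qquad\text{and}\qquad Z(\psi_J)=\Omega_J.$$
   Context: $B\subseteq GL_n(\mathbb C)$ is the upper triangular Borel subgroup, $T$ the diagonal torus, $Fl_n=GL_n(\mathbb C)/B$. For a $B$-representation $W$, $GL_n(\mathbb C)\times^BW\to Fl_n$ is the associated vector bundle, with $[g,w]=[gb,b^{-1}\cdot w]$. $\varpi_i:T\to\mathbb C^\times$, $\mathrm{diag}(t_1,\dots,t_n)\mapsto t_1\cdots t_i$, is extended to $B$ via $B\to T$, and $\mathbb C_{\varpi_i}$ is the corresponding one-dimensional representation. $N$ is the $n\times n$ nilpotent Jordan block ($Ne_1=0$, $Ne_i=e_{i-1}$), and $\mathrm{Pet}_n=\{gB: g^{-1}Ng\in H_{[n-1]}\}$, where for $J\subseteq[n-1]$, $H_J\subseteq\mathfrak{gl}_n(\mathbb C)$ is the $B$-stable subspace of matrices whose $(r,c)$ entry vanishes whenever $r>c$, except possibly the entries $(i+1,i)$ with $i\in J$ (i.e. $H_J=\mathfrak b\oplus\bigoplus_{i\in J}\mathfrak g_{-\alpha_i}$). Define $U_J=GL_n(\mathbb C)\times^B(H_{[n-1]}/H_J)$ with section $\phi_J(gB)=[g,\,g^{-1}Ng \bmod H_J]$ over $\mathrm{Pet}_n$, and $V_J=GL_n(\mathbb C)\times^B\bigl(\bigoplus_{i\in J}\mathbb C_{\varpi_i}^*\bigr)$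 with section $\psi_J(gB)=[g,(\det_i(g))_{i\in J}]$, where $\det_i(g)$ is the leading principal $i\times i$ minor of $g$. Let $X_w=\overline{BwB/B}$, $\Omega_w=\overline{B^-wB/B}$, $w_J$ the longest element of the subgroup of $\mathfrak S_n$ generated by $\{s_i:i\in J\}$, $X_J=X_{w_J}\cap\mathrm{Pet}_n$, $\Omega_J=\Omega_{w_J}\cap\mathrm{Pet}_n$. *)

theory Defs
  imports "HOL-Analysis.Analysis" "Jordan_Normal_Form.Determinant" "HOL-Combinatorics.Transposition"
begin

text \<open>Conventions: matrices are n x n complex JNF matrices, rows/columns 0-indexed. The simple reflection s_i (1 \<le> i \<le> n-1 in the
  paper's 1-indexed notation) swaps the 0-indexed positions i-1 and i.\<close>

definition GL :: "nat \<Rightarrow> complex mat set" where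
  "GL n = {g \<in> carrier_mat n n. invertible_mat g}"

definition Borel :: "nat \<Rightarrow> complex mat set" where
  "Borel n = {b \<in> GL n. \<forall>i j. j < i \<longrightarrow> i < n \<longrightarrow> b $$ (i, j) = 0}"

definition Borel_minus :: "nat \<Rightarrow> complex mat set" where
  "Borel_minus n = {b \<in> GL n. \<forall>i j. i < j \<longrightarrow> j < n \<longrightarrow> b $$ (i, j) = 0}"

definition minv :: "nat \<Rightarrow> complex mat \<Rightarrow> complex mat" where
  "minv n g = (THE h. h \<in> carrier_mat n n \<and> h * g = 1\<^sub>m n)"

definition Njor :: "nat \<Rightarrow> complex mat" where
  "Njor n = mat n n (\<lambda>(r, c). if c = r + 1 then 1 else 0)"

text \<open>H_J, J \<subseteq> {1..n-1}: entries below the diagonal vanish except the (1-indexed)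
  entries (i+1,i), i \<in> J, i.e. the 0-indexed entries (i, i-1).\<close>
definition Hess :: "nat \<Rightarrow> nat set \<Rightarrow> complex mat set" where
  "Hess n J = {A \<in> carrier_mat n n. \<forall>r c. r < n \<longrightarrow> c < r \<longrightarrow>
      A $$ (r, c) = 0 \<or> (r = c + 1 \<and> r \<in> J)}"

text \<open>Representatives g of the points gB of the Peterson variety.\<close>
definition Pet :: "nat \<Rightarrow> complex mat set" where
  "Pet n = {g \<in> GL n. minv n g * Njor n * g \<in> Hess n {1..<n}}"

definition perm_mat :: "nat \<Rightarrow> (nat \<Rightarrow> nat) \<Rightarrow> complex mat" where
  "perm_mat n w = mat n n (\<lambda>(i, j). if i = w j then 1 else 0)"

definition simple_refl :: "nat \<Rightarrow> nat \<Rightarrow> nat" where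
  "simple_refl i = Transposition.transpose (i - 1) i"

inductive_set parabolic :: "nat set \<Rightarrow> (nat \<Rightarrow> nat) set" for J where
  id: "id \<in> parabolic J"
| step: "p \<in> parabolic J \<Longrightarrow> i \<in> J \<Longrightarrow> simple_refl i \<circ> p \<in> parabolic J"

definition perm_length :: "nat \<Rightarrow> (nat \<Rightarrow> nat) \<Rightarrow> nat" where
  "perm_length n p = card {(a, b). a < b \<and> b < n \<and> p b < p a}"

definition longest :: "nat \<Rightarrow> nat set \<Rightarrow> (nat \<Rightarrow> nat)" where
  "longest n J = (ARG_MAX (perm_length n) p. p \<in> parabolic J)"

text \<open>Embedding of n x n matrices into the function space (product = Euclidean topology).\<close>
definition mat_fun :: "complex mat \<Rightarrow> nat \<Rightarrow> nat \<Rightarrow> complex" where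
  "mat_fun A = (\<lambda>i j. if i < dim_row A \<and> j < dim_col A then A $$ (i, j) else 0)"

definition Bruhat_cell :: "nat \<Rightarrow> (nat \<Rightarrow> nat) \<Rightarrow> complex mat set" where
  "Bruhat_cell n w = {b1 * perm_mat n w * b2 | b1 b2. b1 \<in> Borel n \<and> b2 \<in> Borel n}"

definition opp_cell :: "nat \<Rightarrow> (nat \<Rightarrow> nat) \<Rightarrow> complex mat set" where
  "opp_cell n w = {b1 * perm_mat n w * b2 | b1 b2. b1 \<in> Borel_minus n \<and> b2 \<in> Borel n}"

text \<open>Preimages in GL_n of X_w = closure(BwB/B) and Omega_w = closure(B^-wB/B); since
  GL_n \<rightarrow> Fl_n is an open quotient map, the preimage of the closure is the closure of
  BwB (resp. B^-wB) in GL_n.\<close>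
definition schubert :: "nat \<Rightarrow> (nat \<Rightarrow> nat) \<Rightarrow> complex mat set" where
  "schubert n w = {g \<in> GL n. mat_fun g \<in> closure (mat_fun ` Bruhat_cell n w)}"

definition opp_schubert :: "nat \<Rightarrow> (nat \<Rightarrow> nat) \<Rightarrow> complex mat set" where
  "opp_schubert n w = {g \<in> GL n. mat_fun g \<in> closure (mat_fun ` opp_cell n w)}"

definition lead_minor :: "nat \<Rightarrow> complex mat \<Rightarrow> complex" where
  "lead_minor i g = det (mat i i (\<lambda>(r, c). g $$ (r, c)))"

text \<open>Zero loci (as sets of representatives g of points gB of Pet_n):
  phi_J(gB) = [g, g^{-1}Ng mod H_J] vanishes iff g^{-1}Ng \<in> H_J;
  psi_J(gB) = [g, (det_i g)_{i\<in>J}] vanishes iff det_i g = 0 for all i \<in> J.\<close>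
definition zero_phi :: "nat \<Rightarrow> nat set \<Rightarrow> complex mat set" where
  "zero_phi n J = {g \<in> Pet n. minv n g * Njor n * g \<in> Hess n J}"

definition zero_psi :: "nat \<Rightarrow> nat set \<Rightarrow> complex mat set" where
  "zero_psi n J = {g \<in> Pet n. \<forall>i \<in> J. lead_minor i g = 0}"

end

theory Submission
  imports Defs
begin

text \<open>Write \<open>g = L P\<^sub>u U\<close> with \<open>U \<in> B\<close> and \<open>L \<in> B\<close> or \<open>L \<in> B\<^sup>-\<close>. Comparing superdiagonals in
  \<open>(L\<^sup>-\<^sup>1 N L) P\<^sub>u = P\<^sub>u (U g\<^sup>-\<^sup>1 N g U\<^sup>-\<^sup>1)\<close> shows that \<open>g\<^sup>-\<^sup>1 N g \<in> H\<^sub>J\<close> puts \<open>u\<close> into the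
  parabolic subgroup generated by the simple reflections at its descents, and all these descents
  lie in \<open>J\<close>. Every element of a parabolic subgroup lies below its longest element in the Bruhat
  order, because \<open>B u B\<close> degenerates into \<open>B u s\<^sub>k B\<close> along a one-parameter family.

  For \<open>\<phi>\<^sub>J\<close> this gives \<open>u \<le> w\<^sub>J\<close>, i.e. \<open>g \<in> X\<^bsub>w\<^sub>J\<^esub>\<close>. Conversely, the matrices in \<open>X\<^bsub>w\<^sub>J\<^esub>\<close> are
  block upper triangular for the cuts \<open>m \<notin> J\<close>, a closed condition inherited by \<open>g\<^sup>-\<^sup>1 N g\<close>, and
  a Hessenberg matrix with this property lies in \<open>H\<^sub>J\<close>.

  For \<open>\<psi>\<^sub>J\<close>, with \<open>L \<in> B\<^sup>-\<close>, \<open>det\<^sub>i g = 0\<close> iff \<open>u\<close> does not preserve \<open>{1..i}\<close>; on the Peterson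
  variety this means that \<open>u\<close> has a descent at \<open>i\<close>. Hence \<open>w\<^sub>J\<close> lies in the parabolic subgroup
  whose longest element is \<open>u\<close>, so \<open>w\<^sub>J \<le> u\<close> and \<open>g \<in> \<Omega>\<^bsub>w\<^sub>J\<^esub>\<close>. Conversely, \<open>det\<^sub>i\<close>,
  \<open>i \<in> J\<close>, vanishes on \<open>B\<^sup>- w\<^sub>J B\<close> and hence on its closure.\<close>

section \<open>Invertible and block triangular matrices\<close>

lemma index_mult_mat_sum:
  assumes "A \<in> carrier_mat n n" "B \<in> carrier_mat n n" "i < n" "j < n"
  shows "(A * B) $$ (i, j) = (\<Sum>k<n. A $$ (i, k) * B $$ (k, j))"
  using assms by (auto simp: scalar_prod_def lessThan_atLeast0 intro!: sum.cong)

lemma index_mult_mat3_sum: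
  assumes "A \<in> carrier_mat n n" "X \<in> carrier_mat n n" "B \<in> carrier_mat n n" "i < n" "j < n"
  shows "(A * X * B) $$ (i, j) = (\<Sum>k<n. \<Sum>l<n. A $$ (i, k) * X $$ (k, l) * B $$ (l, j))"
proof -
  have "(A * X * B) $$ (i, j) = (\<Sum>l<n. (A * X) $$ (i, l) * B $$ (l, j))"
    using assms by (intro index_mult_mat_sum) auto
  also have "\<dots> = (\<Sum>l<n. (\<Sum>k<n. A $$ (i, k) * X $$ (k, l)) * B $$ (l, j))"
    using assms by (intro sum.cong refl arg_cong2[where f = "(*)"] index_mult_mat_sum) auto
  also have "\<dots> = (\<Sum>l<n. \<Sum>k<n. A $$ (i, k) * X $$ (k, l) * B $$ (l, j))"
    by (simp add: sum_distrib_right)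
  also have "\<dots> = (\<Sum>k<n. \<Sum>l<n. A $$ (i, k) * X $$ (k, l) * B $$ (l, j))"
    by (rule sum.swap)
  finally show ?thesis .
qed

lemma sum_eq_single:
  assumes "finite S" "k0 \<in> S" "\<And>k. k \<in> S \<Longrightarrow> k \<noteq> k0 \<Longrightarrow> f k = 0"
  shows "sum f S = f k0"
  using sum.mono_neutral_left[of S "{k0}" f] assms by auto

lemma invertible_mat_iff_det:
  fixes g :: "complex mat"
  assumes "g \<in> carrier_mat n n"
  shows "invertible_mat g \<longleftrightarrow> det g \<noteq> 0"
proof
  assume "invertible_mat g"
  then obtain h where gh: "g * h = 1\<^sub>m n" and hg: "h * g = 1\<^sub>m (dim_row h)"
    using assms unfolding invertible_mat_def inverts_mat_def by auto
  have "dim_row h = n" using hg assms by (metis carrier_matD(2) index_mult_mat(3) index_one_mat(3))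
  moreover have "dim_col h = n" using gh by (metis index_mult_mat(3) index_one_mat(3))
  ultimately have "h \<in> carrier_mat n n" by auto
  then have "det g * det h = 1" using det_mult[OF assms, of h] gh by simp
  then show "det g \<noteq> 0" by auto
next
  assume "det g \<noteq> 0"
  from det_non_zero_imp_unit[OF assms this, of "()"]
  obtain h where h: "h \<in> carrier_mat n n" "h * g = 1\<^sub>m n"
    unfolding Units_def ring_mat_def by auto
  then have "g * h = 1\<^sub>m n" using mat_mult_left_right_inverse assms by blast
  then show "invertible_mat g" using h assms unfolding invertible_mat_def inverts_mat_def
    by (auto simp: square_mat.simps)
qed

lemma GL_iff_det: "A \<in> GL n \<longleftrightarrow> A \<in> carrier_mat n n \<and> det A \<noteq> 0"
  unfolding GL_def using invertible_mat_iff_det by blast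

lemma GL_carrier: "A \<in> GL n \<Longrightarrow> A \<in> carrier_mat n n"
  by (simp add: GL_iff_det)

lemma GL_det_nonzero: "A \<in> GL n \<Longrightarrow> det A \<noteq> 0"
  by (simp add: GL_iff_det)

lemma GL_mult: "A \<in> GL n \<Longrightarrow> B \<in> GL n \<Longrightarrow> A * B \<in> GL n"
  by (auto simp: GL_iff_det det_mult)

lemma GL_one: "1\<^sub>m n \<in> GL n"
  by (simp add: GL_iff_det)

lemma GL_of_right_inverse:
  assumes "A \<in> carrier_mat n n" "B \<in> carrier_mat n n" "A * B = 1\<^sub>m n"
  shows "A \<in> GL n"
  using det_mult[OF assms(1,2)] assms by (auto simp: GL_iff_det)

lemma minv_inverse:
  assumes "g \<in> GL n"
  shows "minv n g \<in> carrier_mat n n" "minv n g * g = 1\<^sub>m n" "g * minv n g = 1\<^sub>m n"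
proof -
  have g: "g \<in> carrier_mat n n" "det g \<noteq> 0" using assms by (auto simp: GL_iff_det)
  from det_non_zero_imp_unit[OF g, of "()"]
  obtain h where h: "h \<in> carrier_mat n n" "h * g = 1\<^sub>m n"
    unfolding Units_def ring_mat_def by auto
  have gh: "g * h = 1\<^sub>m n" using mat_mult_left_right_inverse g h by blast
  have "minv n g = h" unfolding minv_def
  proof (rule the_equality)
    fix h' assume h': "h' \<in> carrier_mat n n \<and> h' * g = 1\<^sub>m n"
    then have "h' = (h' * g) * h" using g h gh by (metis assoc_mult_mat right_mult_one_mat)
    then show "h' = h" using h' h by simp
  qed (use h in simp)
  then show "minv n g \<in> carrier_mat n n" "minv n g * g = 1\<^sub>m n" "g * minv n g = 1\<^sub>m n"
    using h gh by auto
qed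

lemma minv_GL: "g \<in> GL n \<Longrightarrow> minv n g \<in> GL n"
  using GL_of_right_inverse minv_inverse GL_carrier by metis

lemma GL_of_det_eq_prod_diag:
  fixes A :: "complex mat"
  assumes A: "A \<in> carrier_mat n n" and "det A = prod_list (diag_mat A)"
    and diag: "\<And>i. i < n \<Longrightarrow> A $$ (i, i) \<noteq> 0"
  shows "A \<in> GL n"
  using assms by (simp add: GL_iff_det prod_list_diag_prod prod_zero_iff)

lemma upper_triangular_GL:
  fixes A :: "complex mat"
  assumes A: "A \<in> carrier_mat n n" and "\<And>i j. j < i \<Longrightarrow> i < n \<Longrightarrow> A $$ (i, j) = 0"
    and "\<And>i. i < n \<Longrightarrow> A $$ (i, i) \<noteq> 0"
  shows "A \<in> GL n"
  using assms det_upper_triangular[OF _ A] by (intro GL_of_det_eq_prod_diag) (auto simp: upper_triangular_def)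

lemma lower_triangular_GL:
  fixes A :: "complex mat"
  assumes A: "A \<in> carrier_mat n n" and "\<And>i j. i < j \<Longrightarrow> j < n \<Longrightarrow> A $$ (i, j) = 0"
    and "\<And>i. i < n \<Longrightarrow> A $$ (i, i) \<noteq> 0"
  shows "A \<in> GL n"
  using assms det_lower_triangular[of n A] by (intro GL_of_det_eq_prod_diag) auto

lemma diag_nonzero_of_det_eq_prod_diag:
  fixes A :: "complex mat"
  assumes "A \<in> GL n" "det A = prod_list (diag_mat A)" "i < n"
  shows "A $$ (i, i) \<noteq> 0"
  using assms by (auto simp: GL_iff_det prod_list_diag_prod prod_zero_iff)

text \<open>A matrix is block upper (lower) triangular for the cut at \<open>m\<close> iff it maps the span of the
  first \<open>m\<close> (last \<open>n - m\<close>) standard basis vectors into itself.\<close>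

definition block_upper :: "nat \<Rightarrow> nat \<Rightarrow> complex mat \<Rightarrow> bool" where
  "block_upper n m A \<longleftrightarrow> (\<forall>k c. c < m \<longrightarrow> m \<le> k \<longrightarrow> k < n \<longrightarrow> A $$ (k, c) = 0)"

definition block_lower :: "nat \<Rightarrow> nat \<Rightarrow> complex mat \<Rightarrow> bool" where
  "block_lower n m A \<longleftrightarrow> (\<forall>k c. k < m \<longrightarrow> m \<le> c \<longrightarrow> c < n \<longrightarrow> A $$ (k, c) = 0)"

lemma block_upper_mult:
  assumes "A \<in> carrier_mat n n" "B \<in> carrier_mat n n" "block_upper n m A" "block_upper n m B"
  shows "block_upper n m (A * B)"
  unfolding block_upper_def
proof (intro allI impI)
  fix k c assume kc: "c < m" "m \<le> k" "k < n"
  have "A $$ (k, l) * B $$ (l, c) = 0" if "l < n" for l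
    using assms(3,4) kc that unfolding block_upper_def by (cases "l < m") auto
  then have "(\<Sum>l<n. A $$ (k, l) * B $$ (l, c)) = 0" by (auto intro!: sum.neutral)
  then show "(A * B) $$ (k, c) = 0" using kc assms(1,2) index_mult_mat_sum[of A n B k c] by simp
qed

lemma block_lower_mult:
  assumes "A \<in> carrier_mat n n" "B \<in> carrier_mat n n" "block_lower n m A" "block_lower n m B"
  shows "block_lower n m (A * B)"
  unfolding block_lower_def
proof (intro allI impI)
  fix k c assume kc: "k < m" "m \<le> c" "c < n"
  have "A $$ (k, l) * B $$ (l, c) = 0" if "l < n" for l
    using assms(3,4) kc that unfolding block_lower_def by (cases "l < m") auto
  then have "(\<Sum>l<n. A $$ (k, l) * B $$ (l, c)) = 0" by (auto intro!: sum.neutral)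
  then show "(A * B) $$ (k, c) = 0" using kc assms(1,2) index_mult_mat_sum[of A n B k c] by simp
qed

lemma sum_lessThan_drop_zeros:
  fixes f :: "nat \<Rightarrow> 'a :: comm_monoid_add"
  assumes "m \<le> n" "\<And>k. k < m \<Longrightarrow> f k = 0"
  shows "(\<Sum>k<n. f k) = (\<Sum>k<n - m. f (m + k))"
proof -
  have "(\<Sum>k<n. f k) = (\<Sum>k\<in>{m..<n}. f k)"
    using assms by (intro sum.mono_neutral_right) auto
  also have "\<dots> = (\<Sum>k<n - m. f (m + k))"
    using assms(1) sum.shift_bounds_nat_ivl[of f 0 m "n - m"]
    by (simp add: lessThan_atLeast0 add.commute)
  finally show ?thesis .
qed

lemma index_mult_mat_block_upper:
  assumes "A \<in> carrier_mat n n" "H \<in> carrier_mat n n" "block_upper n m A" "m + i < n" "j < n"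
  shows "(A * H) $$ (m + i, j) = (\<Sum>k<n - m. A $$ (m + i, m + k) * H $$ (m + k, j))"
proof -
  have "(A * H) $$ (m + i, j) = (\<Sum>k<n. A $$ (m + i, k) * H $$ (k, j))"
    using assms by (intro index_mult_mat_sum) auto
  also have "\<dots> = (\<Sum>k<n - m. A $$ (m + i, m + k) * H $$ (m + k, j))"
    using assms by (intro sum_lessThan_drop_zeros) (auto simp: block_upper_def)
  finally show ?thesis .
qed

text \<open>If \<open>A\<close> is block upper triangular, its diagonal block \<open>A\<^sub>2\<^sub>2\<close> is invertible with inverse
  \<open>H\<^sub>2\<^sub>2\<close>, and \<open>A\<^sub>2\<^sub>2 H\<^sub>2\<^sub>1 = 0\<close> forces the lower left block \<open>H\<^sub>2\<^sub>1\<close> of \<open>H\<close> to vanish.\<close>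

lemma block_upper_right_inverse:
  assumes A: "A \<in> carrier_mat n n" and H: "H \<in> carrier_mat n n" and AH: "A * H = 1\<^sub>m n"
    and upper: "block_upper n m A"
  shows "block_upper n m H"
proof (cases "m \<le> n")
  case False then show ?thesis unfolding block_upper_def by auto
next
  case True
  define d where "d = n - m"
  define A22 where "A22 = mat d d (\<lambda>(i, j). A $$ (m + i, m + j))"
  define H22 where "H22 = mat d d (\<lambda>(i, j). H $$ (m + i, m + j))"
  define H21 where "H21 = mat d m (\<lambda>(i, j). H $$ (m + i, j))"
  have c: "A22 \<in> carrier_mat d d" "H22 \<in> carrier_mat d d" "H21 \<in> carrier_mat d m"
    unfolding A22_def H22_def H21_def by auto
  have row: "(\<Sum>k<d. A $$ (m + i, m + k) * H $$ (m + k, j)) = 1\<^sub>m n $$ (m + i, j)" if "i < d" "j < n" for i j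
    using index_mult_mat_block_upper[OF A H upper, of i j] that AH unfolding d_def by auto
  have "A22 * H22 = 1\<^sub>m d"
  proof (rule eq_matI)
    fix i j assume "i < dim_row (1\<^sub>m d)" "j < dim_col (1\<^sub>m d)"
    then have ij: "i < d" "j < d" by auto
    then have "(A22 * H22) $$ (i, j) = (\<Sum>k<d. A $$ (m + i, m + k) * H $$ (m + k, m + j))"
      using c by (auto simp: scalar_prod_def lessThan_atLeast0 A22_def H22_def intro!: sum.cong)
    then show "(A22 * H22) $$ (i, j) = 1\<^sub>m d $$ (i, j)" using row[of i "m + j"] ij d_def by simp
  qed (use c in auto)
  then have HA: "H22 * A22 = 1\<^sub>m d" using mat_mult_left_right_inverse c by blast
  have AH21: "A22 * H21 = 0\<^sub>m d m"
  proof (rule eq_matI)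
    fix i j assume "i < dim_row (0\<^sub>m d m)" "j < dim_col (0\<^sub>m d m)"
    then have ij: "i < d" "j < m" by auto
    then have "(A22 * H21) $$ (i, j) = (\<Sum>k<d. A $$ (m + i, m + k) * H $$ (m + k, j))"
      using c by (auto simp: scalar_prod_def lessThan_atLeast0 A22_def H21_def intro!: sum.cong)
    then show "(A22 * H21) $$ (i, j) = 0\<^sub>m d m $$ (i, j)" using row[of i j] ij d_def True by simp
  qed (use c in auto)
  have "H21 = (H22 * A22) * H21" using HA c by simp
  also have "\<dots> = H22 * (A22 * H21)" using c by (simp add: assoc_mult_mat)
  finally have H21: "H21 = 0\<^sub>m d m" using AH21 c by simp
  show ?thesis unfolding block_upper_def
  proof (intro allI impI)
    fix k l assume kl: "l < m" "m \<le> k" "k < n"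
    then have "H21 $$ (k - m, l) = 0" using H21 d_def by simp
    then show "H $$ (k, l) = 0" using kl d_def unfolding H21_def by simp
  qed
qed

lemma block_lower_right_inverse:
  assumes A: "A \<in> carrier_mat n n" and H: "H \<in> carrier_mat n n" and AH: "A * H = 1\<^sub>m n"
    and lower: "block_lower n m A"
  shows "block_lower n m H"
proof -
  have "H * A = 1\<^sub>m n" using mat_mult_left_right_inverse A H AH by blast
  then have "transpose_mat A * transpose_mat H = 1\<^sub>m n"
    using A H by (metis transpose_mult transpose_one)
  moreover have "block_upper n m (transpose_mat A)"
    using lower A unfolding block_upper_def block_lower_def by auto
  ultimately have upper: "block_upper n m (transpose_mat H)"
    by (intro block_upper_right_inverse[of "transpose_mat A" n "transpose_mat H"]) (use A H in auto)
  show ?thesis unfolding block_lower_def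
  proof (intro allI impI)
    fix k c assume kc: "k < m" "m \<le> c" "c < n"
    then have "transpose_mat H $$ (c, k) = 0" using upper unfolding block_upper_def by blast
    then show "H $$ (k, c) = 0" using H kc by simp
  qed
qed

lemma Borel_iff_block_upper: "b \<in> Borel n \<longleftrightarrow> b \<in> GL n \<and> (\<forall>m. block_upper n m b)"
proof
  assume "b \<in> GL n \<and> (\<forall>m. block_upper n m b)"
  moreover have "b $$ (i, j) = 0" if "\<forall>m. block_upper n m b" "j < i" "i < n" for i j
    using that unfolding block_upper_def by (meson order_refl)
  ultimately show "b \<in> Borel n" unfolding Borel_def by auto
qed (auto simp: Borel_def block_upper_def)

lemma Borel_minus_iff_block_lower: "b \<in> Borel_minus n \<longleftrightarrow> b \<in> GL n \<and> (\<forall>m. block_lower n m b)"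
proof
  assume "b \<in> GL n \<and> (\<forall>m. block_lower n m b)"
  moreover have "b $$ (i, j) = 0" if "\<forall>m. block_lower n m b" "i < j" "j < n" for i j
    using that unfolding block_lower_def by (meson order_refl)
  ultimately show "b \<in> Borel_minus n" unfolding Borel_minus_def by auto
qed (auto simp: Borel_minus_def block_lower_def)

lemma Borel_carrier: "b \<in> Borel n \<Longrightarrow> b \<in> carrier_mat n n"
  unfolding Borel_def by (simp add: GL_carrier)

lemma Borel_minus_carrier: "b \<in> Borel_minus n \<Longrightarrow> b \<in> carrier_mat n n"
  unfolding Borel_minus_def by (simp add: GL_carrier)

lemma Borel_mult: "A \<in> Borel n \<Longrightarrow> B \<in> Borel n \<Longrightarrow> A * B \<in> Borel n"
  unfolding Borel_iff_block_upper using GL_mult block_upper_mult GL_carrier by metis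

lemma Borel_minus_mult: "A \<in> Borel_minus n \<Longrightarrow> B \<in> Borel_minus n \<Longrightarrow> A * B \<in> Borel_minus n"
  unfolding Borel_minus_iff_block_lower using GL_mult block_lower_mult GL_carrier by metis

lemma Borel_one: "1\<^sub>m n \<in> Borel n"
  unfolding Borel_def using GL_one by auto

lemma Borel_minus_one: "1\<^sub>m n \<in> Borel_minus n"
  unfolding Borel_minus_def using GL_one by auto

lemma Borel_minv: "b \<in> Borel n \<Longrightarrow> minv n b \<in> Borel n"
  unfolding Borel_iff_block_upper
  using block_upper_right_inverse minv_inverse minv_GL GL_carrier by metis

lemma Borel_minus_minv: "b \<in> Borel_minus n \<Longrightarrow> minv n b \<in> Borel_minus n"
  unfolding Borel_minus_iff_block_lower
  using block_lower_right_inverse minv_inverse minv_GL GL_carrier by metis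

lemma Borel_diag_nonzero:
  assumes "L \<in> Borel n" "i < n"
  shows "L $$ (i, i) \<noteq> 0"
proof (rule diag_nonzero_of_det_eq_prod_diag[OF _ _ assms(2)])
  show "L \<in> GL n" using assms by (simp add: Borel_def)
  show "det L = prod_list (diag_mat L)"
    using assms Borel_carrier[OF assms(1)]
    by (intro det_upper_triangular[OF _ Borel_carrier]) (auto simp: Borel_def upper_triangular_def)
qed

lemma Borel_minus_diag_nonzero:
  assumes "L \<in> Borel_minus n" "i < n"
  shows "L $$ (i, i) \<noteq> 0"
proof (rule diag_nonzero_of_det_eq_prod_diag[OF _ _ assms(2)])
  show "L \<in> GL n" using assms by (simp add: Borel_minus_def)
  show "det L = prod_list (diag_mat L)"
    using assms by (intro det_lower_triangular[OF _ Borel_minus_carrier]) (auto simp: Borel_minus_def)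
qed

section \<open>Permutations and permutation matrices\<close>

lemma permutes_less: "(u :: nat \<Rightarrow> nat) permutes {0..<n} \<Longrightarrow> j < n \<Longrightarrow> u j < n"
  using permutes_in_image[of u "{0..<n}" j] by auto

lemma permutes_inv_less: "(u :: nat \<Rightarrow> nat) permutes {0..<n} \<Longrightarrow> j < n \<Longrightarrow> inv_into UNIV u j < n"
  using permutes_less[OF permutes_inv] by blast

lemma perm_mat_carrier [simp]: "perm_mat n w \<in> carrier_mat n n"
  unfolding perm_mat_def by simp

lemma perm_mat_dim [simp]: "dim_row (perm_mat n w) = n" "dim_col (perm_mat n w) = n"
  unfolding perm_mat_def by simp_all

lemma perm_mat_index [simp]: "i < n \<Longrightarrow> j < n \<Longrightarrow> perm_mat n w $$ (i, j) = (if i = w j then 1 else 0)"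
  unfolding perm_mat_def by simp

lemma perm_mat_mult_index_left:
  assumes u: "u permutes {0..<n}" and A: "A \<in> carrier_mat n n" and ij: "i < n" "j < n"
  shows "(perm_mat n u * A) $$ (i, j) = A $$ (inv_into UNIV u i, j)"
proof -
  have "(perm_mat n u * A) $$ (i, j) = (\<Sum>k<n. perm_mat n u $$ (i, k) * A $$ (k, j))"
    using A ij by (intro index_mult_mat_sum) auto
  also have "\<dots> = perm_mat n u $$ (i, inv_into UNIV u i) * A $$ (inv_into UNIV u i, j)"
  proof (rule sum_eq_single)
    fix k assume "k \<in> {..<n}" "k \<noteq> inv_into UNIV u i"
    then show "perm_mat n u $$ (i, k) * A $$ (k, j) = 0"
      using ij permutes_inverses[OF u] by (metis lessThan_iff mult_eq_0_iff perm_mat_index)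
  qed (use permutes_inv_less[OF u ij(1)] in auto)
  also have "\<dots> = A $$ (inv_into UNIV u i, j)"
    using ij permutes_inv_less[OF u ij(1)] permutes_inverses[OF u] by simp
  finally show ?thesis .
qed

lemma perm_mat_mult_index_right:
  assumes u: "u permutes {0..<n}" and A: "A \<in> carrier_mat n n" and ij: "i < n" "j < n"
  shows "(A * perm_mat n u) $$ (i, j) = A $$ (i, u j)"
proof -
  have "(A * perm_mat n u) $$ (i, j) = (\<Sum>k<n. A $$ (i, k) * perm_mat n u $$ (k, j))"
    using A ij by (intro index_mult_mat_sum) auto
  also have "\<dots> = A $$ (i, u j) * perm_mat n u $$ (u j, j)"
    by (rule sum_eq_single) (use ij permutes_less[OF u ij(2)] in auto)
  also have "\<dots> = A $$ (i, u j)"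
    using ij permutes_less[OF u ij(2)] by simp
  finally show ?thesis .
qed

lemma perm_mat_mult:
  assumes u: "u permutes {0..<n}" and v: "v permutes {0..<n}"
  shows "perm_mat n u * perm_mat n v = perm_mat n (u \<circ> v)"
proof (rule eq_matI)
  fix i j assume "i < dim_row (perm_mat n (u \<circ> v))" "j < dim_col (perm_mat n (u \<circ> v))"
  then have ij: "i < n" "j < n" by auto
  then show "(perm_mat n u * perm_mat n v) $$ (i, j) = perm_mat n (u \<circ> v) $$ (i, j)"
    using perm_mat_mult_index_left[OF u _ ij] permutes_inv_less[OF u ij(1)] permutes_inv_eq[OF u]
    by auto
qed auto

lemma perm_mat_id: "perm_mat n id = 1\<^sub>m n"
  by (rule eq_matI) auto

lemma perm_mat_GL:
  assumes "u permutes {0..<n}"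
  shows "perm_mat n u \<in> GL n"
proof (rule GL_of_right_inverse)
  show "perm_mat n u * perm_mat n (inv_into UNIV u) = 1\<^sub>m n"
    using perm_mat_mult[OF assms permutes_inv[OF assms]] permutes_inv_o[OF assms] perm_mat_id
    by simp
qed auto

lemma simple_refl_apply: "simple_refl k x = (if x = k - 1 then k else if x = k then k - 1 else x)"
  unfolding simple_refl_def transpose_def by auto

lemma simple_refl_comp_self: "simple_refl k \<circ> simple_refl k = id"
  unfolding simple_refl_def by simp

lemma simple_refl_permutes: "0 < k \<Longrightarrow> k < n \<Longrightarrow> simple_refl k permutes {0..<n}"
  unfolding simple_refl_def by (intro permutes_swap_id) auto

lemma simple_refl_less:
  "0 < k \<Longrightarrow> a < b \<Longrightarrow> \<not> (a = k - 1 \<and> b = k) \<Longrightarrow> simple_refl k a < simple_refl k b"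
  unfolding simple_refl_apply by auto

definition preserves_initial :: "nat \<Rightarrow> (nat \<Rightarrow> nat) \<Rightarrow> bool" where
  "preserves_initial m u \<longleftrightarrow> (\<forall>j<m. u j < m)"

lemma preserves_initial_simple_refl: "0 < k \<Longrightarrow> k \<noteq> m \<Longrightarrow> preserves_initial m (simple_refl k)"
  unfolding preserves_initial_def simple_refl_apply by auto

lemma preserves_initial_comp:
  "preserves_initial m u \<Longrightarrow> preserves_initial m v \<Longrightarrow> preserves_initial m (u \<circ> v)"
  unfolding preserves_initial_def by auto

lemma preserves_initial_ge:
  assumes u: "u permutes {0..<n}" and "preserves_initial m u" and "m \<le> j" "j < n"
  shows "m \<le> u j"
proof (rule ccontr)
  assume "\<not> m \<le> u j"
  have "u ` {0..<m} \<subseteq> {0..<m}" using assms(2) unfolding preserves_initial_def by auto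
  then have "u ` {0..<m} = {0..<m}" using endo_inj_surj permutes_inj_on[OF u] by blast
  then obtain j' where "j' < m" "u j' = u j" using \<open>\<not> m \<le> u j\<close> by (metis atLeastLessThan_iff imageE le0 not_le)
  moreover have "j' = j" using \<open>u j' = u j\<close> permutes_inj[OF u] by (auto simp: inj_def)
  ultimately show False using assms(3) by simp
qed

lemma block_upper_perm_mat: "preserves_initial m u \<Longrightarrow> block_upper n m (perm_mat n u)"
  unfolding block_upper_def preserves_initial_def by auto

lemma card_perm_less:
  assumes u: "u permutes {0..<n}" and j: "j < n"
  shows "card {a. a < n \<and> u a < u j} = u j"
proof -
  have "u ` {a. a < n \<and> u a < u j} = {0..<u j}"
  proof
    show "{0..<u j} \<subseteq> u ` {a. a < n \<and> u a < u j}"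
    proof
      fix y assume y: "y \<in> {0..<u j}"
      then have "inv_into UNIV u y < n" using permutes_less[OF u j] permutes_inv_less[OF u] by simp
      moreover have "u (inv_into UNIV u y) = y" using permutes_inverses[OF u] by simp
      ultimately show "y \<in> u ` {a. a < n \<and> u a < u j}" using y by (metis (mono_tags) imageI mem_Collect_eq atLeastLessThan_iff)
    qed
  qed auto
  then have "bij_betw u {a. a < n \<and> u a < u j} {0..<u j}"
    using permutes_inj_on[OF u] by (simp add: bij_betw_def)
  then show ?thesis using bij_betw_same_card by fastforce
qed

section \<open>The decompositions \<open>GL\<^sub>n = B\<^sup>- W B\<close> and \<open>GL\<^sub>n = B W B\<close>\<close>

definition nonzero_vec :: "nat \<Rightarrow> (nat \<Rightarrow> complex) \<Rightarrow> bool" where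
  "nonzero_vec n v \<longleftrightarrow> (\<exists>j<n. v j \<noteq> 0)"

definition first_nonzero :: "nat \<Rightarrow> (nat \<Rightarrow> complex) \<Rightarrow> nat" where
  "first_nonzero n v = (LEAST j. j < n \<and> v j \<noteq> 0)"

lemma first_nonzeroD:
  assumes "nonzero_vec n v"
  shows "first_nonzero n v < n" "v (first_nonzero n v) \<noteq> 0" "\<And>j. j < first_nonzero n v \<Longrightarrow> v j = 0"
proof -
  obtain j where j: "j < n \<and> v j \<noteq> 0" using assms unfolding nonzero_vec_def by auto
  have "first_nonzero n v < n \<and> v (first_nonzero n v) \<noteq> 0"
    unfolding first_nonzero_def by (rule LeastI[of _ j]) (use j in auto)
  then show "first_nonzero n v < n" "v (first_nonzero n v) \<noteq> 0" by auto
  fix i assume "i < first_nonzero n v"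
  then have "\<not> (i < n \<and> v i \<noteq> 0)" unfolding first_nonzero_def by (rule not_less_Least)
  then show "v i = 0" using \<open>i < first_nonzero n v\<close> \<open>first_nonzero n v < n\<close> by auto
qed

lemma first_nonzeroI:
  assumes "t < n" "v t \<noteq> 0" "\<And>j. j < t \<Longrightarrow> v j = 0"
  shows "first_nonzero n v = t" "nonzero_vec n v"
proof -
  show "nonzero_vec n v" using assms unfolding nonzero_vec_def by auto
  show "first_nonzero n v = t" unfolding first_nonzero_def
  proof (rule Least_equality)
    fix y assume "y < n \<and> v y \<noteq> 0"
    then show "t \<le> y" using assms(3) by (metis not_le)
  qed (use assms in auto)
qed

lemma nonzero_vec_cong:
  assumes "\<And>j. j < n \<Longrightarrow> v j = w j"
  shows "nonzero_vec n v = nonzero_vec n w"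
  unfolding nonzero_vec_def using assms by auto

lemma first_nonzero_cong:
  assumes "\<And>j. j < n \<Longrightarrow> v j = w j"
  shows "first_nonzero n v = first_nonzero n w"
proof -
  have eq: "(j < n \<and> v j \<noteq> 0) = (j < n \<and> w j \<noteq> 0)" for j
    using assms[of j] by (cases "j < n") simp_all
  show ?thesis unfolding first_nonzero_def eq ..
qed

lemma sum_lessThan_add_delta:
  fixes \<gamma> y :: "nat \<Rightarrow> 'a :: semiring_0"
  assumes "l0 < i"
  shows "(\<Sum>l<i. (\<gamma> l + (if l = l0 then c else 0)) * y l) = (\<Sum>l<i. \<gamma> l * y l) + c * y l0"
proof -
  have "(\<Sum>l<i. (\<gamma> l + (if l = l0 then c else 0)) * y l) =
      (\<Sum>l<i. \<gamma> l * y l) + (\<Sum>l<i. (if l = l0 then c else 0) * y l)"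
    by (simp add: distrib_right sum.distrib)
  also have "(\<Sum>l<i. (if l = l0 then c else 0) * y l) = (\<Sum>l<i. if l = l0 then c * y l0 else 0)"
    by (intro sum.cong) auto
  finally show ?thesis using assms by simp
qed

text \<open>Gaussian elimination of \<open>v\<close> against the vectors \<open>y l\<close>, \<open>l < i\<close>, sweeping the columns from
  left to right; the entries of \<open>v\<close> left of column \<open>n - d\<close> are already zero.\<close>

lemma reduce_to_new_first_nonzero:
  fixes y :: "nat \<Rightarrow> nat \<Rightarrow> complex" and v :: "nat \<Rightarrow> complex"
  assumes "\<forall>j < n - d. v j = 0"
  shows "\<exists>\<gamma>. \<not> nonzero_vec n (\<lambda>j. v j - (\<Sum>l<i. \<gamma> l * y l j)) \<or>
    (\<forall>l<i. nonzero_vec n (y l) \<longrightarrow> first_nonzero n (y l) \<noteq> first_nonzero n (\<lambda>j. v j - (\<Sum>l<i. \<gamma> l * y l j)))"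
  using assms
proof (induction d arbitrary: v)
  case 0
  then have "\<not> nonzero_vec n (\<lambda>j. v j - (\<Sum>l<i. 0 * y l j))" unfolding nonzero_vec_def by auto
  then show ?case by (intro exI[of _ "\<lambda>_. 0"]) auto
next
  case (Suc d)
  show ?case
  proof (cases "n \<le> d \<or> v (n - Suc d) = 0")
    case True
    then have "\<forall>j < n - d. v j = 0" using Suc.prems
      by (metis Suc_diff_Suc diff_is_0_eq' less_Suc_eq not_less_zero not_le)
    then show ?thesis using Suc.IH by blast
  next
    case False
    define t where "t = n - Suc d"
    have t: "t < n" "Suc t = n - d" "v t \<noteq> 0" using False unfolding t_def by auto
    have vz: "\<And>j. j < t \<Longrightarrow> v j = 0" using Suc.prems t_def by auto
    show ?thesis
    proof (cases "\<exists>l<i. nonzero_vec n (y l) \<and> first_nonzero n (y l) = t")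
      case False
      have "first_nonzero n (\<lambda>j. v j - (\<Sum>l<i. 0 * y l j)) = t"
        by (rule first_nonzeroI) (use t vz in auto)
      then show ?thesis using False by (intro exI[of _ "\<lambda>_. 0"]) auto
    next
      case True
      then obtain l0 where l0: "l0 < i" "nonzero_vec n (y l0)" "first_nonzero n (y l0) = t" by auto
      note y0 = first_nonzeroD[OF l0(2), unfolded l0(3)]
      define c where "c = v t / y l0 t"
      define v1 where "v1 = (\<lambda>j. v j - c * y l0 j)"
      have "\<forall>j < n - d. v1 j = 0"
      proof (intro allI impI)
        fix j assume "j < n - d"
        then have "j < t \<or> j = t" using t by auto
        then show "v1 j = 0" using vz y0 unfolding v1_def c_def by auto
      qed
      then obtain \<gamma>1 where \<gamma>1: "\<not> nonzero_vec n (\<lambda>j. v1 j - (\<Sum>l<i. \<gamma>1 l * y l j)) \<or>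
          (\<forall>l<i. nonzero_vec n (y l) \<longrightarrow> first_nonzero n (y l) \<noteq> first_nonzero n (\<lambda>j. v1 j - (\<Sum>l<i. \<gamma>1 l * y l j)))"
        using Suc.IH by blast
      define \<gamma> where "\<gamma> = (\<lambda>l. \<gamma>1 l + (if l = l0 then c else 0))"
      have eq: "(\<lambda>j. v j - (\<Sum>l<i. \<gamma> l * y l j)) = (\<lambda>j. v1 j - (\<Sum>l<i. \<gamma>1 l * y l j))"
      proof
        fix j
        show "v j - (\<Sum>l<i. \<gamma> l * y l j) = v1 j - (\<Sum>l<i. \<gamma>1 l * y l j)"
          using sum_lessThan_add_delta[OF l0(1), of \<gamma>1 c "\<lambda>l. y l j"] unfolding \<gamma>_def v1_def
          by (simp add: diff_diff_eq add.commute)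
      qed
      show ?thesis using \<gamma>1 unfolding eq[symmetric] by blast
    qed
  qed
qed

lemma triangular_row_reduction:
  fixes g :: "complex mat"
  shows "i \<le> n \<Longrightarrow> \<exists>y \<alpha>. (\<forall>k<i. \<forall>j. g $$ (k, j) = y k j + (\<Sum>l<k. \<alpha> k l * y l j)) \<and>
     (\<forall>l<i. \<forall>l'<i. l \<noteq> l' \<longrightarrow> nonzero_vec n (y l) \<longrightarrow> nonzero_vec n (y l') \<longrightarrow>
        first_nonzero n (y l) \<noteq> first_nonzero n (y l'))"
proof (induction i)
  case 0 then show ?case by auto
next
  case (Suc i)
  then obtain y \<alpha> where rows: "\<forall>k<i. \<forall>j. g $$ (k, j) = y k j + (\<Sum>l<k. \<alpha> k l * y l j)"
    and leads: "\<forall>l<i. \<forall>l'<i. l \<noteq> l' \<longrightarrow> nonzero_vec n (y l) \<longrightarrow> nonzero_vec n (y l') \<longrightarrow>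
        first_nonzero n (y l) \<noteq> first_nonzero n (y l')"
    by auto
  obtain \<gamma> where \<gamma>: "\<not> nonzero_vec n (\<lambda>j. g $$ (i, j) - (\<Sum>l<i. \<gamma> l * y l j)) \<or>
      (\<forall>l<i. nonzero_vec n (y l) \<longrightarrow>
        first_nonzero n (y l) \<noteq> first_nonzero n (\<lambda>j. g $$ (i, j) - (\<Sum>l<i. \<gamma> l * y l j)))"
    using reduce_to_new_first_nonzero[where n = n and d = n and v = "\<lambda>j. g $$ (i, j)" and i = i and y = y]
    by auto
  define y' where "y' = y(i := (\<lambda>j. g $$ (i, j) - (\<Sum>l<i. \<gamma> l * y l j)))"
  define \<alpha>' where "\<alpha>' = \<alpha>(i := \<gamma>)"
  have "g $$ (k, j) = y' k j + (\<Sum>l<k. \<alpha>' k l * y' l j)" if "k < Suc i" for k j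
  proof (cases "k < i")
    case True
    have "(\<Sum>l<k. \<alpha>' k l * y' l j) = (\<Sum>l<k. \<alpha> k l * y l j)"
      using True unfolding y'_def \<alpha>'_def by (intro sum.cong) auto
    then show ?thesis using rows True unfolding y'_def by auto
  next
    case False
    then have k: "k = i" using that by auto
    have "(\<Sum>l<k. \<alpha>' k l * y' l j) = (\<Sum>l<i. \<gamma> l * y l j)"
      using k unfolding y'_def \<alpha>'_def by (intro sum.cong) auto
    then show ?thesis using k unfolding y'_def by simp
  qed
  moreover have "first_nonzero n (y' l) \<noteq> first_nonzero n (y' l')"
    if lt: "l < Suc i" "l' < Suc i" "l \<noteq> l'" and nz: "nonzero_vec n (y' l)" "nonzero_vec n (y' l')" for l l'
  proof -
    have new: "first_nonzero n (y' k) \<noteq> first_nonzero n (y' i) \<and> first_nonzero n (y' i) \<noteq> first_nonzero n (y' k)"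
      if "k < i" "nonzero_vec n (y' k)" "nonzero_vec n (y' i)" for k
      using \<gamma> that unfolding y'_def by auto
    consider "l = i" "l' < i" | "l' = i" "l < i" | "l < i" "l' < i" using lt by linarith
    then show ?thesis
    proof cases
      case 1 then show ?thesis using new[of l'] nz by blast
    next
      case 2 then show ?thesis using new[of l] nz by blast
    next
      case 3 then show ?thesis using leads lt nz unfolding y'_def by auto
    qed
  qed
  ultimately show ?case by blast
qed

lemma det_eq_0_of_zero_row:
  fixes A :: "complex mat"
  assumes A: "A \<in> carrier_mat n n" and k: "k < n" and z: "\<And>j. j < n \<Longrightarrow> A $$ (k, j) = 0"
  shows "det A = 0"
proof -
  have "(\<Prod>i = 0..<n. A $$ (i, p i)) = 0" if "p permutes {0..<n}" for p
    using k z permutes_less[OF that k] by (intro prod_zero bexI[of _ k]) auto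
  then show ?thesis unfolding det_def'[OF A] by (intro sum.neutral) simp
qed

lemma det_eq_0_of_zero_col:
  fixes A :: "complex mat"
  assumes A: "A \<in> carrier_mat n n" and k: "k < n" and z: "\<And>j. j < n \<Longrightarrow> A $$ (j, k) = 0"
  shows "det A = 0"
  using det_transpose[OF A] det_eq_0_of_zero_row[of "transpose_mat A" n k] assms by simp

lemma unit_lower_row_reduction:
  fixes g :: "complex mat"
  assumes "g \<in> carrier_mat n n"
  obtains L X where "L \<in> Borel_minus n" "X \<in> carrier_mat n n" "g = L * X"
    "\<And>l l'. l < n \<Longrightarrow> l' < n \<Longrightarrow> l \<noteq> l' \<Longrightarrow> nonzero_vec n (\<lambda>j. X $$ (l, j)) \<Longrightarrow>
       nonzero_vec n (\<lambda>j. X $$ (l', j)) \<Longrightarrow>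
       first_nonzero n (\<lambda>j. X $$ (l, j)) \<noteq> first_nonzero n (\<lambda>j. X $$ (l', j))"
proof -
  obtain y \<alpha> where rows: "\<forall>k<n. \<forall>j. g $$ (k, j) = y k j + (\<Sum>l<k. \<alpha> k l * y l j)"
    and leads: "\<forall>l<n. \<forall>l'<n. l \<noteq> l' \<longrightarrow> nonzero_vec n (y l) \<longrightarrow> nonzero_vec n (y l') \<longrightarrow>
        first_nonzero n (y l) \<noteq> first_nonzero n (y l')"
    using triangular_row_reduction[of n n g] by auto
  define L where "L = mat n n (\<lambda>(k, l). if l < k then \<alpha> k l else if l = k then 1 else 0)"
  define X where "X = mat n n (\<lambda>(k, j). y k j)"
  have Lc: "L \<in> carrier_mat n n" and Xc: "X \<in> carrier_mat n n" unfolding L_def X_def by auto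
  have "L \<in> GL n" by (rule lower_triangular_GL) (auto simp: L_def)
  then have "L \<in> Borel_minus n" unfolding Borel_minus_def L_def by auto
  moreover have "g = L * X"
  proof (rule eq_matI)
    fix k j assume "k < dim_row (L * X)" "j < dim_col (L * X)"
    then have kj: "k < n" "j < n" using Lc Xc by auto
    define f where "f = (\<lambda>l. L $$ (k, l) * X $$ (l, j))"
    have "(L * X) $$ (k, j) = (\<Sum>l<n. f l)"
      unfolding f_def using Lc Xc kj by (intro index_mult_mat_sum) auto
    also have "\<dots> = (\<Sum>l<Suc k. f l)"
      by (rule sum.mono_neutral_right) (use kj in \<open>auto simp: f_def L_def\<close>)
    also have "\<dots> = (\<Sum>l<k. \<alpha> k l * y l j) + y k j"
      using kj by (auto simp: f_def L_def X_def intro!: sum.cong)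
    finally show "g $$ (k, j) = (L * X) $$ (k, j)" using rows kj by (simp add: add.commute)
  qed (use assms Lc Xc in auto)
  moreover have "nonzero_vec n (\<lambda>j. X $$ (l, j)) = nonzero_vec n (y l)" if "l < n" for l
    using that by (intro nonzero_vec_cong) (simp add: X_def)
  moreover have "first_nonzero n (\<lambda>j. X $$ (l, j)) = first_nonzero n (y l)" if "l < n" for l
    using that by (intro first_nonzero_cong) (simp add: X_def)
  ultimately show ?thesis
    using that[of L X] Xc leads by simp
qed

lemma perm_times_upper_of_distinct_first_nonzero:
  assumes X: "X \<in> GL n"
    and leads: "\<And>l l'. l < n \<Longrightarrow> l' < n \<Longrightarrow> l \<noteq> l' \<Longrightarrow> nonzero_vec n (\<lambda>j. X $$ (l, j)) \<Longrightarrow>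
       nonzero_vec n (\<lambda>j. X $$ (l', j)) \<Longrightarrow>
       first_nonzero n (\<lambda>j. X $$ (l, j)) \<noteq> first_nonzero n (\<lambda>j. X $$ (l', j))"
  obtains u U where "u permutes {0..<n}" "U \<in> Borel n" "X = perm_mat n u * U"
proof -
  have Xc: "X \<in> carrier_mat n n" using X by (rule GL_carrier)
  have nz: "nonzero_vec n (\<lambda>j. X $$ (k, j))" if "k < n" for k
  proof (rule ccontr)
    assume "\<not> nonzero_vec n (\<lambda>j. X $$ (k, j))"
    then have "det X = 0" using that by (intro det_eq_0_of_zero_row[OF Xc that]) (auto simp: nonzero_vec_def)
    then show False using X by (simp add: GL_iff_det)
  qed
  define c where "c = (\<lambda>k. if k < n then first_nonzero n (\<lambda>j. X $$ (k, j)) else k)"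
  have "inj_on c {0..<n}"
    by (rule inj_onI) (use leads nz in \<open>auto simp: c_def\<close>)
  moreover have "c ` {0..<n} \<subseteq> {0..<n}" using nz first_nonzeroD unfolding c_def by auto
  ultimately have "bij_betw c {0..<n} {0..<n}"
    using endo_inj_surj[of "{0..<n}" c] by (simp add: bij_betw_def)
  then have c: "c permutes {0..<n}" by (rule bij_imp_permutes) (auto simp: c_def)
  define u where "u = inv_into UNIV c"
  have u: "u permutes {0..<n}" unfolding u_def using permutes_inv[OF c] .
  define U where "U = mat n n (\<lambda>(a, j). X $$ (u a, j))"
  have Uc: "U \<in> carrier_mat n n" unfolding U_def by auto
  have XPU: "X = perm_mat n u * U"
  proof (rule eq_matI)
    fix i j assume "i < dim_row (perm_mat n u * U)" "j < dim_col (perm_mat n u * U)"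
    then have ij: "i < n" "j < n" using Uc by auto
    then show "X $$ (i, j) = (perm_mat n u * U) $$ (i, j)"
      using perm_mat_mult_index_left[OF u Uc ij] permutes_inv_less[OF u ij(1)] permutes_inverses[OF u]
      by (simp add: U_def)
  qed (use Xc Uc in auto)
  have "U $$ (a, j) = 0" if "j < a" "a < n" for a j
  proof -
    have ua: "u a < n" using permutes_less[OF u that(2)] .
    have "c (u a) = a" unfolding u_def using permutes_inverses[OF c] by simp
    then have "first_nonzero n (\<lambda>j. X $$ (u a, j)) = a" using ua unfolding c_def by simp
    then show ?thesis unfolding U_def using first_nonzeroD(3)[OF nz[OF ua]] that by simp
  qed
  moreover have "U \<in> GL n"
    using X XPU det_mult[OF perm_mat_carrier[of n u] Uc] Uc by (auto simp: GL_iff_det)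
  ultimately have "U \<in> Borel n" unfolding Borel_def by auto
  then show ?thesis using that u XPU by blast
qed

theorem LPU_decomposition:
  assumes "g \<in> GL n"
  obtains L u U where "L \<in> Borel_minus n" "u permutes {0..<n}" "U \<in> Borel n"
    "g = L * perm_mat n u * U"
proof -
  obtain L X where L: "L \<in> Borel_minus n" and Xc: "X \<in> carrier_mat n n" and gLX: "g = L * X"
    and leads: "\<And>l l'. l < n \<Longrightarrow> l' < n \<Longrightarrow> l \<noteq> l' \<Longrightarrow> nonzero_vec n (\<lambda>j. X $$ (l, j)) \<Longrightarrow>
       nonzero_vec n (\<lambda>j. X $$ (l', j)) \<Longrightarrow>
       first_nonzero n (\<lambda>j. X $$ (l, j)) \<noteq> first_nonzero n (\<lambda>j. X $$ (l', j))"
    using unit_lower_row_reduction[OF GL_carrier[OF assms]] by metis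
  have "det L * det X \<noteq> 0"
    using assms gLX det_mult[OF Borel_minus_carrier[OF L] Xc] by (simp add: GL_iff_det)
  then have "X \<in> GL n" using Xc by (simp add: GL_iff_det)
  then obtain u U where "u permutes {0..<n}" "U \<in> Borel n" "X = perm_mat n u * U"
    using perm_times_upper_of_distinct_first_nonzero leads by metis
  moreover have "L * (perm_mat n u * U) = L * perm_mat n u * U"
    using Borel_minus_carrier[OF L] Borel_carrier[OF \<open>U \<in> Borel n\<close>] by (simp add: assoc_mult_mat[of _ n n _ n _ n])
  ultimately show ?thesis using that L gLX by metis
qed

definition w0 :: "nat \<Rightarrow> nat \<Rightarrow> nat" where
  "w0 n = (\<lambda>i. if i < n then n - 1 - i else i)"

lemma w0_w0: "w0 n \<circ> w0 n = id"
  unfolding w0_def by (auto simp: fun_eq_iff)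

lemma w0_permutes: "w0 n permutes {0..<n}"
proof (rule bij_imp_permutes)
  have "inj_on (w0 n) {0..<n}" unfolding w0_def inj_on_def by auto
  moreover have "w0 n ` {0..<n} \<subseteq> {0..<n}" unfolding w0_def by auto
  ultimately show "bij_betw (w0 n) {0..<n} {0..<n}"
    unfolding bij_betw_def using endo_inj_surj by blast
qed (auto simp: w0_def)

lemma w0_conj_Borel_minus:
  assumes L: "L \<in> Borel_minus n"
  shows "perm_mat n (w0 n) * L * perm_mat n (w0 n) \<in> Borel n"
proof -
  let ?P = "perm_mat n (w0 n)"
  have Lc: "L \<in> carrier_mat n n" using L by (rule Borel_minus_carrier)
  have "?P * L * ?P \<in> GL n"
    using GL_mult perm_mat_GL[OF w0_permutes] L unfolding Borel_minus_def by blast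
  moreover have "(?P * L * ?P) $$ (i, j) = 0" if "j < i" "i < n" for i j
  proof -
    have "(?P * L * ?P) $$ (i, j) = (L * ?P) $$ (inv_into UNIV (w0 n) i, j)"
      unfolding assoc_mult_mat[OF perm_mat_carrier Lc perm_mat_carrier]
      by (rule perm_mat_mult_index_left[OF w0_permutes]) (use that Lc in auto)
    also have "\<dots> = L $$ (w0 n i, w0 n j)"
      using inv_unique_comp[OF w0_w0 w0_w0] perm_mat_mult_index_right[OF w0_permutes Lc] that
        permutes_less[OF w0_permutes]
      by simp
    also have "\<dots> = 0" using L that unfolding Borel_minus_def w0_def by auto
    finally show ?thesis .
  qed
  ultimately show ?thesis unfolding Borel_def by auto
qed

theorem Bruhat_decomposition:
  assumes g: "g \<in> GL n"
  obtains U1 v U2 where "U1 \<in> Borel n" "v permutes {0..<n}" "U2 \<in> Borel n"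
    "g = U1 * perm_mat n v * U2"
proof -
  define P where "P = perm_mat n (w0 n)"
  have Pc: "P \<in> carrier_mat n n" unfolding P_def by simp
  have PP: "P * P = 1\<^sub>m n" unfolding P_def
    using perm_mat_mult[OF w0_permutes w0_permutes] w0_w0 perm_mat_id by simp
  have "P * g \<in> GL n" using GL_mult[OF perm_mat_GL[OF w0_permutes] g] unfolding P_def .
  then obtain L u U where L: "L \<in> Borel_minus n" and u: "u permutes {0..<n}" and U: "U \<in> Borel n"
    and dec: "P * g = L * perm_mat n u * U"
    by (rule LPU_decomposition)
  have c: "g \<in> carrier_mat n n" "L \<in> carrier_mat n n" "U \<in> carrier_mat n n"
    using g L U GL_carrier Borel_minus_carrier Borel_carrier by auto
  have PPX: "P * (P * X) = X" if "X \<in> carrier_mat n n" for X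
    using assoc_mult_mat[OF Pc Pc that, symmetric] PP left_mult_one_mat[OF that] by simp
  have "g = P * (P * g)" using PPX[OF c(1)] by simp
  also have "\<dots> = (P * L * P) * (P * perm_mat n u) * U"
    unfolding dec using Pc c PPX perm_mat_carrier[of n u] by (simp add: assoc_mult_mat[of _ n n _ n _ n])
  also have "P * perm_mat n u = perm_mat n (w0 n \<circ> u)"
    unfolding P_def using perm_mat_mult[OF w0_permutes u] .
  finally show ?thesis
    using that w0_conj_Borel_minus[OF L] U permutes_compose[OF u w0_permutes] unfolding P_def by blast
qed

section \<open>Parabolic subgroups of the symmetric group\<close>

definition descents :: "nat \<Rightarrow> (nat \<Rightarrow> nat) \<Rightarrow> nat set" where
  "descents n v = {k \<in> {1..<n}. v k < v (k - 1)}"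

text \<open>The parabolic subgroup \<open>\<frakS>\<^sub>J\<close> generated by the \<open>s\<^sub>i\<close>, \<open>i \<in> J\<close>, described by the
  initial segments its elements preserve.\<close>

definition parabolic_perms :: "nat \<Rightarrow> nat set \<Rightarrow> (nat \<Rightarrow> nat) set" where
  "parabolic_perms n J = {v. v permutes {0..<n} \<and> (\<forall>m\<in>{1..<n} - J. preserves_initial m v)}"

lemma parabolic_perms_mono: "J \<subseteq> K \<Longrightarrow> parabolic_perms n J \<subseteq> parabolic_perms n K"
  unfolding parabolic_perms_def by auto

lemma parabolic_perms_comp_simple_refl:
  assumes v: "v \<in> parabolic_perms n J" and k: "k \<in> J" "0 < k" "k < n"
  shows "v \<circ> simple_refl k \<in> parabolic_perms n J"
proof -
  have "preserves_initial m (v \<circ> simple_refl k)" if m: "m \<in> {1..<n} - J" for m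
  proof (rule preserves_initial_comp)
    show "preserves_initial m v" using v m unfolding parabolic_perms_def by auto
    show "preserves_initial m (simple_refl k)" using k m by (intro preserves_initial_simple_refl) auto
  qed
  moreover have "v \<circ> simple_refl k permutes {0..<n}"
    using v permutes_compose[OF simple_refl_permutes[OF k(2,3)]] unfolding parabolic_perms_def by auto
  ultimately show ?thesis unfolding parabolic_perms_def by auto
qed

lemma descents_of_no_ascent:
  assumes v: "v permutes {0..<n}" and J: "J \<subseteq> {1..<n}"
    and no_ascent: "\<not> (\<exists>k\<in>J. v (k - 1) < v k)"
  shows "J \<subseteq> descents n v"
proof
  fix k assume k: "k \<in> J"
  then have "v k \<noteq> v (k - 1)" using J permutes_inj[OF v] unfolding inj_def by force
  then show "k \<in> descents n v" using k J no_ascent unfolding descents_def by auto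
qed

lemma descents_decrease_on_block:
  assumes J: "J \<subseteq> descents n v" and ab: "a < b" "b < n" and block: "{a<..b} \<subseteq> J"
  shows "v b < v a"
  using ab block
proof (induction b rule: less_induct)
  case (less b)
  have "b \<in> descents n v" using less.prems J by auto
  then have desc: "v b < v (b - 1)" unfolding descents_def by auto
  show ?case
  proof (cases "b - 1 = a")
    case False
    moreover have "{a<..b - 1} \<subseteq> {a<..b}" by auto
    ultimately have "v (b - 1) < v a" using less by (intro less.IH) auto
    then show ?thesis using desc by simp
  qed (use desc in simp)
qed

lemma ascent_across_block_gap:
  assumes v: "v \<in> parabolic_perms n J" and ab: "a < b" "b < n" and gap: "\<not> {a<..b} \<subseteq> J"
  shows "v a < v b"
proof -
  from gap obtain m where "m \<in> {a<..b}" "m \<notin> J" by blast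
  then have m: "a < m" "m \<le> b" "m \<notin> J" by auto
  then have "preserves_initial m v" using v ab unfolding parabolic_perms_def by auto
  moreover from this have "m \<le> v b"
    using v m ab by (intro preserves_initial_ge[of v n]) (auto simp: parabolic_perms_def)
  ultimately show ?thesis using m unfolding preserves_initial_def by fastforce
qed

text \<open>The positions at which \<open>v\<close> takes values below \<open>v j\<close> are read off from \<open>J\<close> alone, so \<open>v\<close>
  is determined by \<open>J\<close>.\<close>

lemma parabolic_perm_with_descents_value:
  assumes v: "v \<in> parabolic_perms n J" and J: "J \<subseteq> descents n v" and j: "j < n"
  shows "v j = card {a. a < n \<and> ((a < j \<and> \<not> {a<..j} \<subseteq> J) \<or> (j < a \<and> {j<..a} \<subseteq> J))}"
proof -
  have "{a. a < n \<and> v a < v j} = {a. a < n \<and> ((a < j \<and> \<not> {a<..j} \<subseteq> J) \<or> (j < a \<and> {j<..a} \<subseteq> J))}"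
  proof (intro Collect_cong conj_cong refl)
    fix a assume a: "a < n"
    show "v a < v j \<longleftrightarrow> (a < j \<and> \<not> {a<..j} \<subseteq> J) \<or> (j < a \<and> {j<..a} \<subseteq> J)"
    proof (cases a j rule: linorder_cases)
      case less
      then show ?thesis
        using descents_decrease_on_block[OF J less j] ascent_across_block_gap[OF v less j]
        by (cases "{a<..j} \<subseteq> J") auto
    next
      case greater
      then show ?thesis
        using descents_decrease_on_block[OF J greater a] ascent_across_block_gap[OF v greater a]
        by (cases "{j<..a} \<subseteq> J") auto
    qed simp
  qed
  then show ?thesis using card_perm_less[of v n j] v j unfolding parabolic_perms_def by simp
qed

lemma parabolic_perm_with_descents_unique:
  assumes "v \<in> parabolic_perms n J" "J \<subseteq> descents n v"
    and "w \<in> parabolic_perms n J" "J \<subseteq> descents n w"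
  shows "v = w"
proof
  fix j
  show "v j = w j"
  proof (cases "j < n")
    case True
    then show ?thesis
      using parabolic_perm_with_descents_value[OF assms(1,2)] parabolic_perm_with_descents_value[OF assms(3,4)]
      by simp
  next
    case False
    then show ?thesis using assms permutes_not_in[of v "{0..<n}" j] permutes_not_in[of w "{0..<n}" j]
      unfolding parabolic_perms_def by simp
  qed
qed

lemma card_pairs_comp_simple_refl_less:
  fixes p :: "nat \<Rightarrow> nat" and R :: "nat \<Rightarrow> nat \<Rightarrow> bool"
  assumes k: "0 < k" "k < n" and R: "R (p (k - 1)) (p k)" "\<not> R (p k) (p (k - 1))"
  shows "card {(a, b). a < b \<and> b < n \<and> R ((p \<circ> simple_refl k) a) ((p \<circ> simple_refl k) b)}
    < card {(a, b). a < b \<and> b < n \<and> R (p a) (p b)}"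
proof -
  let ?s = "simple_refl k"
  let ?A = "{(a, b). a < b \<and> b < n \<and> R (p a) (p b)}"
  let ?A' = "{(a, b). a < b \<and> b < n \<and> R ((p \<circ> ?s) a) ((p \<circ> ?s) b)}"
  let ?f = "map_prod ?s ?s"
  have fin: "finite ?A" by (rule finite_subset[of _ "{..<n} \<times> {..<n}"]) auto
  have "inj ?s" unfolding simple_refl_def by simp
  then have "inj_on ?f ?A'" using prod.inj_map inj_on_subset by blast
  moreover have "?f ` ?A' \<subseteq> ?A - {(k - 1, k)}"
  proof
    fix q assume "q \<in> ?f ` ?A'"
    then obtain a b where ab: "a < b" "b < n" "R (p (?s a)) (p (?s b))" "q = (?s a, ?s b)" by auto
    have "?s (k - 1) = k" "?s k = k - 1" using k by (auto simp: simple_refl_apply)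
    then have "\<not> (a = k - 1 \<and> b = k)" using ab R by auto
    then have "?s a < ?s b" using simple_refl_less[OF k(1) ab(1)] by blast
    moreover have "?s b < n" using ab k by (auto simp: simple_refl_apply)
    moreover have "q \<noteq> (k - 1, k)"
    proof
      assume "q = (k - 1, k)"
      then have "?s a = k - 1" "?s b = k" using ab by auto
      then have "a = k" "b = k - 1" using k by (auto simp: simple_refl_apply split: if_splits)
      then show False using ab by simp
    qed
    ultimately show "q \<in> ?A - {(k - 1, k)}" using ab by auto
  qed
  ultimately have "card ?A' \<le> card (?A - {(k - 1, k)})"
    using fin by (intro card_inj_on_le) auto
  also have "\<dots> < card ?A"
    using fin R k by (intro card_Diff1_less) auto
  finally show ?thesis .
qed

definition ascents :: "nat \<Rightarrow> (nat \<Rightarrow> nat) \<Rightarrow> nat" where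
  "ascents n v = card {(a, b). a < b \<and> b < n \<and> v a < v b}"

lemma ascents_comp_simple_refl_less:
  "0 < k \<Longrightarrow> k < n \<Longrightarrow> v (k - 1) < v k \<Longrightarrow> ascents n (v \<circ> simple_refl k) < ascents n v"
  unfolding ascents_def by (rule card_pairs_comp_simple_refl_less) auto

lemma perm_length_comp_simple_refl_gt:
  assumes k: "0 < k" "k < n" and asc: "p (k - 1) < p k"
  shows "perm_length n p < perm_length n (p \<circ> simple_refl k)"
proof -
  have "p \<circ> simple_refl k \<circ> simple_refl k = p" by (simp add: comp_assoc simple_refl_comp_self)
  moreover have "(p \<circ> simple_refl k) k < (p \<circ> simple_refl k) (k - 1)"
    using k asc by (simp add: simple_refl_apply)
  ultimately show ?thesis
    using card_pairs_comp_simple_refl_less[OF k, of "\<lambda>x y. y < x" "p \<circ> simple_refl k"]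
    unfolding perm_length_def by (simp add: simple_refl_apply)
qed

lemma perm_length_le: "perm_length n p \<le> n * n"
  unfolding perm_length_def by (rule order.trans[OF card_mono[of "{..<n} \<times> {..<n}"]]) auto

lemma parabolic_in_parabolic_perms:
  assumes J: "J \<subseteq> {1..<n}" and p: "p \<in> parabolic J"
  shows "p \<in> parabolic_perms n J"
  using p
proof (induction rule: parabolic.induct)
  case id
  show ?case
    using permutes_id[of "{0..<n}"] unfolding parabolic_perms_def preserves_initial_def by (simp add: id_def)
next
  case (step p i)
  then have i: "0 < i" "i < n" using J by auto
  have "preserves_initial m (simple_refl i \<circ> p)" if m: "m \<in> {1..<n} - J" for m
  proof (rule preserves_initial_comp)
    show "preserves_initial m (simple_refl i)" using i m step.hyps(2) by (intro preserves_initial_simple_refl) auto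
    show "preserves_initial m p" using step.IH m unfolding parabolic_perms_def by auto
  qed
  moreover have "simple_refl i \<circ> p permutes {0..<n}"
    using step.IH permutes_compose simple_refl_permutes[OF i] unfolding parabolic_perms_def by blast
  ultimately show ?case unfolding parabolic_perms_def by blast
qed

lemma parabolic_comp:
  assumes p: "p \<in> parabolic J" and q: "q \<in> parabolic J"
  shows "p \<circ> q \<in> parabolic J"
  using p
proof (induction rule: parabolic.induct)
  case id then show ?case using q by simp
next
  case (step p i)
  have "simple_refl i \<circ> p \<circ> q = simple_refl i \<circ> (p \<circ> q)" by (rule comp_assoc)
  then show ?case using parabolic.step[OF step.IH step.hyps(2)] by metis
qed

lemma simple_refl_parabolic: "k \<in> J \<Longrightarrow> simple_refl k \<in> parabolic J"
  using parabolic.step[OF parabolic.id, of k J] by simp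

lemma longest_parabolic:
  shows "longest n J \<in> parabolic J" "p \<in> parabolic J \<Longrightarrow> perm_length n p \<le> perm_length n (longest n J)"
proof -
  have "longest n J \<in> parabolic J \<and> (\<forall>y. y \<in> parabolic J \<longrightarrow> perm_length n y \<le> perm_length n (longest n J))"
    unfolding longest_def
    by (rule arg_max_nat_lemma[where k = id and b = "Suc (n * n)"])
      (use parabolic.id perm_length_le in \<open>auto simp: less_Suc_eq_le\<close>)
  then show "longest n J \<in> parabolic J" "p \<in> parabolic J \<Longrightarrow> perm_length n p \<le> perm_length n (longest n J)"
    by auto
qed

lemma longest_in_parabolic_perms: "J \<subseteq> {1..<n} \<Longrightarrow> longest n J \<in> parabolic_perms n J"
  using parabolic_in_parabolic_perms longest_parabolic(1) by blast

lemma longest_descents: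
  assumes J: "J \<subseteq> {1..<n}"
  shows "J \<subseteq> descents n (longest n J)"
proof (rule descents_of_no_ascent[OF _ J])
  let ?w = "longest n J"
  show w: "?w permutes {0..<n}" using longest_in_parabolic_perms[OF J] by (simp add: parabolic_perms_def)
  show "\<not> (\<exists>k\<in>J. ?w (k - 1) < ?w k)"
  proof
    assume "\<exists>k\<in>J. ?w (k - 1) < ?w k"
    then obtain k where k: "k \<in> J" "0 < k" "k < n" "?w (k - 1) < ?w k" using J by auto
    then have "perm_length n ?w < perm_length n (?w \<circ> simple_refl k)"
      by (intro perm_length_comp_simple_refl_gt) auto
    moreover have "?w \<circ> simple_refl k \<in> parabolic J"
      using parabolic_comp[OF longest_parabolic(1) simple_refl_parabolic[OF k(1)]] .
    ultimately show False using longest_parabolic(2)[of "?w \<circ> simple_refl k" J n] by linarith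
  qed
qed

section \<open>Closures of double cosets\<close>

definition double_coset :: "complex mat set \<Rightarrow> nat \<Rightarrow> (nat \<Rightarrow> nat) \<Rightarrow> complex mat set" where
  "double_coset G n w = {b1 * perm_mat n w * b2 | b1 b2. b1 \<in> G \<and> b2 \<in> Borel n}"

definition mat_closure :: "nat \<Rightarrow> complex mat set \<Rightarrow> complex mat set" where
  "mat_closure n S = {X \<in> carrier_mat n n. mat_fun X \<in> closure (mat_fun ` S)}"

definition mat_monoid :: "nat \<Rightarrow> complex mat set \<Rightarrow> bool" where
  "mat_monoid n G \<longleftrightarrow> G \<subseteq> carrier_mat n n \<and> (\<forall>A\<in>G. \<forall>B\<in>G. A * B \<in> G) \<and> 1\<^sub>m n \<in> G"

lemma schubert_eq: "schubert n w = GL n \<inter> mat_closure n (double_coset (Borel n) n w)"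
  unfolding schubert_def mat_closure_def double_coset_def Bruhat_cell_def using GL_carrier by auto

lemma opp_schubert_eq: "opp_schubert n w = GL n \<inter> mat_closure n (double_coset (Borel_minus n) n w)"
  unfolding opp_schubert_def mat_closure_def double_coset_def opp_cell_def using GL_carrier by auto

lemma continuous_on_entry: "continuous_on UNIV (\<lambda>f :: nat \<Rightarrow> nat \<Rightarrow> complex. f k l)"
proof -
  have "continuous_on UNIV ((\<lambda>g :: nat \<Rightarrow> complex. g l) \<circ> (\<lambda>f :: nat \<Rightarrow> nat \<Rightarrow> complex. f k))"
    by (rule continuous_on_compose) (auto intro: continuous_on_subset[OF continuous_on_product_coordinates])
  then show ?thesis by (simp add: comp_def)
qed

definition sandwich_fun :: "nat \<Rightarrow> complex mat \<Rightarrow> complex mat \<Rightarrow> (nat \<Rightarrow> nat \<Rightarrow> complex) \<Rightarrow> nat \<Rightarrow> nat \<Rightarrow> complex" where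
  "sandwich_fun n A B f =
    (\<lambda>i j. if i < n \<and> j < n then (\<Sum>k<n. \<Sum>l<n. A $$ (i, k) * f k l * B $$ (l, j)) else 0)"

lemma continuous_on_sandwich_fun: "continuous_on UNIV (sandwich_fun n A B)"
  unfolding sandwich_fun_def
proof (intro continuous_on_coordinatewise_then_product)
  fix i j
  show "continuous_on UNIV (\<lambda>f :: nat \<Rightarrow> nat \<Rightarrow> complex.
      if i < n \<and> j < n then (\<Sum>k<n. \<Sum>l<n. A $$ (i, k) * f k l * B $$ (l, j)) else 0)"
    by (cases "i < n \<and> j < n") (auto intro!: continuous_intros continuous_on_entry)
qed

lemma mat_fun_mult3:
  assumes "A \<in> carrier_mat n n" "X \<in> carrier_mat n n" "B \<in> carrier_mat n n"
  shows "mat_fun (A * X * B) = sandwich_fun n A B (mat_fun X)"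
  using assms index_mult_mat3_sum[OF assms]
  by (intro ext) (auto simp: sandwich_fun_def mat_fun_def intro!: sum.cong)

lemma mat_closure_sandwich:
  assumes X: "X \<in> mat_closure n S" and AB: "A \<in> carrier_mat n n" "B \<in> carrier_mat n n"
    and S: "\<And>Y. Y \<in> S \<Longrightarrow> Y \<in> carrier_mat n n \<and> A * Y * B \<in> S"
  shows "A * X * B \<in> mat_closure n S"
proof -
  have Xc: "X \<in> carrier_mat n n" and Xf: "mat_fun X \<in> closure (mat_fun ` S)"
    using X unfolding mat_closure_def by auto
  have "sandwich_fun n A B ` (mat_fun ` S) \<subseteq> mat_fun ` S"
  proof
    fix z assume "z \<in> sandwich_fun n A B ` (mat_fun ` S)"
    then obtain Y where Y: "Y \<in> S" "z = sandwich_fun n A B (mat_fun Y)" by auto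
    then have "z = mat_fun (A * Y * B)" using S[OF Y(1)] mat_fun_mult3[OF AB(1) _ AB(2)] by simp
    then show "z \<in> mat_fun ` S" using S[OF Y(1)] by simp
  qed
  then have "sandwich_fun n A B ` closure (mat_fun ` S) \<subseteq> closure (mat_fun ` S)"
    using closure_subset[of "mat_fun ` S"]
    by (intro image_closure_subset continuous_on_subset[OF continuous_on_sandwich_fun]) auto
  then show ?thesis using Xf Xc AB mat_fun_mult3[OF AB(1) Xc AB(2)] unfolding mat_closure_def by auto
qed

lemma mat_closure_minimal:
  assumes "S \<subseteq> mat_closure n T"
  shows "mat_closure n S \<subseteq> mat_closure n T"
proof -
  have "mat_fun ` S \<subseteq> closure (mat_fun ` T)" using assms unfolding mat_closure_def by auto
  then have "closure (mat_fun ` S) \<subseteq> closure (mat_fun ` T)" by (intro closure_minimal) auto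
  then show ?thesis unfolding mat_closure_def by auto
qed

lemma mat_closure_subset: "S \<subseteq> carrier_mat n n \<Longrightarrow> S \<subseteq> mat_closure n S"
  unfolding mat_closure_def by (auto intro: closure_subset[THEN subsetD])

lemma mat_monoid_Borel: "mat_monoid n (Borel n)"
  unfolding mat_monoid_def using Borel_mult Borel_one Borel_carrier by blast

lemma mat_monoid_Borel_minus: "mat_monoid n (Borel_minus n)"
  unfolding mat_monoid_def using Borel_minus_mult Borel_minus_one Borel_minus_carrier by blast

lemma double_coset_carrier: "mat_monoid n G \<Longrightarrow> double_coset G n w \<subseteq> carrier_mat n n"
  unfolding double_coset_def mat_monoid_def using Borel_carrier by fastforce

lemma double_coset_sandwich:
  assumes G: "mat_monoid n G" and Y: "Y \<in> double_coset G n w" and b: "b1 \<in> G" "b2 \<in> Borel n"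
  shows "b1 * Y * b2 \<in> double_coset G n w"
proof -
  obtain c1 c2 where c: "c1 \<in> G" "c2 \<in> Borel n" "Y = c1 * perm_mat n w * c2"
    using Y unfolding double_coset_def by auto
  have car: "b1 \<in> carrier_mat n n" "c1 \<in> carrier_mat n n" "c2 \<in> carrier_mat n n" "b2 \<in> carrier_mat n n"
    using G b c Borel_carrier unfolding mat_monoid_def by auto
  have P: "perm_mat n w \<in> carrier_mat n n" by simp
  have "b1 * Y * b2 = b1 * c1 * perm_mat n w * c2 * b2"
    unfolding c(3) using car P by (simp add: assoc_mult_mat[of _ n n _ n _ n])
  also have "\<dots> = (b1 * c1) * perm_mat n w * (c2 * b2)"
    using car P by (intro assoc_mult_mat[of _ n n _ n _ n]) auto
  finally have "b1 * Y * b2 = (b1 * c1) * perm_mat n w * (c2 * b2)" .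
  moreover have "b1 * c1 \<in> G" using G b c unfolding mat_monoid_def by auto
  moreover have "c2 * b2 \<in> Borel n" using Borel_mult b c by auto
  ultimately show ?thesis unfolding double_coset_def by blast
qed

lemma double_coset_subset_closure:
  assumes G: "mat_monoid n G" and P: "perm_mat n u \<in> mat_closure n (double_coset G n v)"
  shows "double_coset G n u \<subseteq> mat_closure n (double_coset G n v)"
proof
  fix Y assume "Y \<in> double_coset G n u"
  then obtain b1 b2 where b: "b1 \<in> G" "b2 \<in> Borel n" "Y = b1 * perm_mat n u * b2"
    unfolding double_coset_def by auto
  have "b1 \<in> carrier_mat n n" "b2 \<in> carrier_mat n n"
    using G b Borel_carrier unfolding mat_monoid_def by auto
  then show "Y \<in> mat_closure n (double_coset G n v)" unfolding b(3)
    using double_coset_carrier[OF G] double_coset_sandwich[OF G _ b(1,2)]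
    by (intro mat_closure_sandwich[OF P]) auto
qed

lemma double_coset_closure_mult:
  assumes G: "mat_monoid n G" and "perm_mat n v \<in> mat_closure n (double_coset G n w)"
    and "b1 \<in> G" "b2 \<in> Borel n"
  shows "b1 * perm_mat n v * b2 \<in> mat_closure n (double_coset G n w)"
  using double_coset_subset_closure[OF assms(1,2)] assms(3,4) unfolding double_coset_def by blast

lemma perm_mat_in_closure_double_coset:
  assumes "mat_monoid n G"
  shows "perm_mat n u \<in> mat_closure n (double_coset G n u)"
proof -
  have "perm_mat n u \<in> double_coset G n u"
    using assms Borel_one unfolding double_coset_def mat_monoid_def
    by (auto intro!: exI[of _ "1\<^sub>m n"])
  then show ?thesis using mat_closure_subset double_coset_carrier[OF assms] by blast
qed

definition transvection :: "nat \<Rightarrow> nat \<Rightarrow> nat \<Rightarrow> complex \<Rightarrow> complex mat" where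
  "transvection n x y c = mat n n (\<lambda>(i, j). (if i = j then 1 else 0) + (if i = x \<and> j = y then c else 0))"

definition swap_factor :: "nat \<Rightarrow> nat \<Rightarrow> complex \<Rightarrow> complex mat" where
  "swap_factor n k c = mat n n (\<lambda>(a, j). if a = k - 1 \<and> j = k - 1 then 1 / c else if a = k - 1 \<and> j = k then 1
      else if a = k \<and> j = k then - c else if a = j then 1 else 0)"

lemma transvection_Borel:
  assumes "x < y" "y < n"
  shows "transvection n x y c \<in> Borel n"
proof -
  have "transvection n x y c \<in> GL n"
    by (rule upper_triangular_GL) (use assms in \<open>auto simp: transvection_def\<close>)
  then show ?thesis unfolding Borel_def using assms by (auto simp: transvection_def)
qed

lemma transvection_Borel_minus:
  assumes "y < x" "x < n"
  shows "transvection n x y c \<in> Borel_minus n"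
proof -
  have "transvection n x y c \<in> GL n"
    by (rule lower_triangular_GL) (use assms in \<open>auto simp: transvection_def\<close>)
  then show ?thesis unfolding Borel_minus_def using assms by (auto simp: transvection_def)
qed

lemma swap_factor_Borel:
  assumes "0 < k" "k < n" "c \<noteq> 0"
  shows "swap_factor n k c \<in> Borel n"
proof -
  have "swap_factor n k c \<in> GL n"
    by (rule upper_triangular_GL) (use assms in \<open>auto simp: swap_factor_def\<close>)
  then show ?thesis unfolding Borel_def using assms by (auto simp: swap_factor_def)
qed

lemma index_transvection_mult:
  assumes A: "A \<in> carrier_mat n n" and ij: "i < n" "j < n" and xy: "x < n" "y < n"
  shows "(transvection n x y c * A) $$ (i, j) = A $$ (i, j) + (if i = x then c * A $$ (y, j) else 0)"
proof -
  have "(transvection n x y c * A) $$ (i, j) = (\<Sum>l<n. transvection n x y c $$ (i, l) * A $$ (l, j))"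
    using A ij by (intro index_mult_mat_sum) (auto simp: transvection_def)
  also have "\<dots> = (\<Sum>l<n. (if l = i then A $$ (i, j) else 0) + (if l = y then (if i = x then c * A $$ (y, j) else 0) else 0))"
    using ij by (intro sum.cong refl) (auto simp: transvection_def distrib_right)
  also have "\<dots> = A $$ (i, j) + (if i = x then c * A $$ (y, j) else 0)"
    using ij xy by (simp add: sum.distrib)
  finally show ?thesis .
qed

lemma index_transvection_perm_swap_factor:
  assumes u: "u permutes {0..<n}" and k: "0 < k" "k < n" and c: "c \<noteq> 0" and ij: "i < n" "j < n"
  shows "(transvection n (u k) (u (k - 1)) c * perm_mat n u * swap_factor n k c) $$ (i, j) =
    (if i = u (simple_refl k j) then 1 else 0) + (if i = u (k - 1) \<and> j = k - 1 then 1 / c else 0)"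
proof -
  define a where "a = inv_into UNIV u i"
  have a: "a < n" "u a = i" unfolding a_def using permutes_inv_less[OF u ij(1)] permutes_inverses[OF u] by auto
  have inj: "\<And>p q. u p = u q \<longleftrightarrow> p = q" using permutes_inj[OF u] unfolding inj_def by auto
  have Bc: "swap_factor n k c \<in> carrier_mat n n" unfolding swap_factor_def by simp
  have ukn: "u k < n" "u (k - 1) < n" using permutes_less[OF u] k by auto
  have Pc: "perm_mat n u \<in> carrier_mat n n" by simp
  have e0: "transvection n (u k) (u (k - 1)) c * perm_mat n u * swap_factor n k c =
      transvection n (u k) (u (k - 1)) c * (perm_mat n u * swap_factor n k c)"
    by (rule assoc_mult_mat[of _ n n _ n _ n]) (auto simp: transvection_def swap_factor_def)
  have PB: "\<And>p q. p < n \<Longrightarrow> q < n \<Longrightarrow>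
      (perm_mat n u * swap_factor n k c) $$ (p, q) = swap_factor n k c $$ (inv_into UNIV u p, q)"
    using perm_mat_mult_index_left[OF u Bc] by blast
  have "(transvection n (u k) (u (k - 1)) c * perm_mat n u * swap_factor n k c) $$ (i, j) =
      (perm_mat n u * swap_factor n k c) $$ (i, j) +
      (if i = u k then c * (perm_mat n u * swap_factor n k c) $$ (u (k - 1), j) else 0)"
    unfolding e0 by (rule index_transvection_mult) (use ij ukn Bc in auto)
  also have "\<dots> = swap_factor n k c $$ (a, j) + (if a = k then c * swap_factor n k c $$ (k - 1, j) else 0)"
    using PB ij ukn a inj permutes_inverses[OF u] unfolding a_def by auto
  also have "\<dots> = (if a = simple_refl k j then 1 else 0) + (if a = k - 1 \<and> j = k - 1 then 1 / c else 0)"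
    using a ij k c by (auto simp: swap_factor_def simple_refl_apply)
  also have "\<dots> = (if i = u (simple_refl k j) then 1 else 0) + (if i = u (k - 1) \<and> j = k - 1 then 1 / c else 0)"
    using a(2) inj by auto
  finally show ?thesis .
qed

definition swap_curve :: "nat \<Rightarrow> (nat \<Rightarrow> nat) \<Rightarrow> nat \<Rightarrow> complex \<Rightarrow> nat \<Rightarrow> nat \<Rightarrow> complex" where
  "swap_curve n u k e = (\<lambda>i j. if i < n \<and> j < n then (if i = u (simple_refl k j) then 1 else 0) +
      (if i = u (k - 1) \<and> j = k - 1 then e else 0) else 0)"

lemma continuous_on_swap_curve: "continuous_on UNIV (swap_curve n u k)"
  unfolding swap_curve_def
proof (intro continuous_on_coordinatewise_then_product)
  fix i j
  show "continuous_on UNIV (\<lambda>e :: complex. if i < n \<and> j < n then (if i = u (simple_refl k j) then 1 else 0) +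
      (if i = u (k - 1) \<and> j = k - 1 then e else 0) else 0)"
    by (cases "i < n \<and> j < n"; cases "i = u (k - 1) \<and> j = k - 1") (auto intro!: continuous_intros)
qed

text \<open>The basic Bruhat relation: \<open>E(c) P\<^sub>u S(c) = P\<^bsub>u s\<^sub>k\<^esub> + c\<^sup>-\<^sup>1 e\<^bsub>u(k-1),k-1\<^esub>\<close> with
  a transvection \<open>E(c) \<in> G\<close> and \<open>S(c) \<in> B\<close>, and this tends to \<open>P\<^bsub>u s\<^sub>k\<^esub>\<close> as \<open>c \<rightarrow> \<infinity>\<close>.\<close>

lemma perm_mat_comp_simple_refl_in_closure:
  assumes G: "mat_monoid n G" and u: "u permutes {0..<n}" and k: "0 < k" "k < n"
    and transvection: "\<And>c. c \<noteq> 0 \<Longrightarrow> transvection n (u k) (u (k - 1)) c \<in> G"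
  shows "perm_mat n (u \<circ> simple_refl k) \<in> mat_closure n (double_coset G n u)"
proof -
  let ?T = "mat_fun ` double_coset G n u"
  have limit: "swap_curve n u k 0 = mat_fun (perm_mat n (u \<circ> simple_refl k))"
    unfolding swap_curve_def mat_fun_def by (intro ext) auto
  have mem: "swap_curve n u k (1 / c) \<in> ?T" if c: "c \<noteq> 0" for c
  proof -
    let ?X = "transvection n (u k) (u (k - 1)) c * perm_mat n u * swap_factor n k c"
    have "?X \<in> double_coset G n u"
      unfolding double_coset_def using transvection[OF c] swap_factor_Borel[OF k c] by blast
    moreover have "mat_fun ?X = swap_curve n u k (1 / c)"
      using index_transvection_perm_swap_factor[OF u k c]
      by (intro ext) (auto simp: mat_fun_def swap_curve_def transvection_def swap_factor_def)
    ultimately show ?thesis by (metis imageI)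
  qed
  have "((\<lambda>m. swap_curve n u k (inverse (of_nat m))) \<longlongrightarrow> swap_curve n u k 0) sequentially"
    by (rule continuous_on_tendsto_compose[OF continuous_on_swap_curve lim_inverse_n]) auto
  moreover have "eventually (\<lambda>m. swap_curve n u k (inverse (of_nat m)) \<in> closure ?T) sequentially"
  proof (rule eventually_sequentiallyI[of 1])
    fix m :: nat assume "1 \<le> m"
    then have "swap_curve n u k (1 / of_nat m) \<in> ?T" by (intro mem) simp
    then show "swap_curve n u k (inverse (of_nat m)) \<in> closure ?T"
      by (simp add: inverse_eq_divide closure_subset[THEN subsetD])
  qed
  ultimately have "swap_curve n u k 0 \<in> closure ?T"
    by (intro Lim_in_closed_set[OF closed_closure]) auto
  then show ?thesis unfolding mat_closure_def limit by simp
qed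

text \<open>Both statements below say that \<open>w\<close>, the longest element of \<open>\<frakS>\<^sub>J\<close>, dominates every
  \<open>v \<in> \<frakS>\<^sub>J\<close> in the Bruhat order; the induction removes ascents in \<open>J\<close> one at a time.\<close>

lemma perm_mat_in_closure_longest:
  assumes w: "w \<in> parabolic_perms n J" "J \<subseteq> descents n w"
  shows "v \<in> parabolic_perms n J \<Longrightarrow> perm_mat n v \<in> mat_closure n (double_coset (Borel n) n w)"
proof (induction "ascents n v" arbitrary: v rule: less_induct)
  case less
  have J: "J \<subseteq> {1..<n}" using w(2) unfolding descents_def by auto
  have v: "v permutes {0..<n}" using less.prems unfolding parabolic_perms_def by auto
  show ?case
  proof (cases "\<exists>k\<in>J. v (k - 1) < v k")
    case True
    then obtain k where k: "k \<in> J" "0 < k" "k < n" "v (k - 1) < v k" using J by auto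
    define u where "u = v \<circ> simple_refl k"
    have uS: "u \<in> parabolic_perms n J"
      unfolding u_def by (rule parabolic_perms_comp_simple_refl[OF less.prems k(1-3)])
    have u: "u permutes {0..<n}" using uS unfolding parabolic_perms_def by auto
    have "ascents n u < ascents n v" unfolding u_def by (rule ascents_comp_simple_refl_less[OF k(2,3,4)])
    then have IH: "perm_mat n u \<in> mat_closure n (double_coset (Borel n) n w)" using less.hyps uS by blast
    have "u k = v (k - 1)" "u (k - 1) = v k" unfolding u_def using k by (auto simp: simple_refl_apply)
    then have "perm_mat n (u \<circ> simple_refl k) \<in> mat_closure n (double_coset (Borel n) n u)"
      using k permutes_less[OF u, of "k - 1"]
      by (intro perm_mat_comp_simple_refl_in_closure[OF mat_monoid_Borel u k(2,3)] transvection_Borel) auto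
    moreover have "u \<circ> simple_refl k = v" unfolding u_def by (simp add: comp_assoc simple_refl_comp_self)
    moreover have "mat_closure n (double_coset (Borel n) n u) \<subseteq> mat_closure n (double_coset (Borel n) n w)"
      by (rule mat_closure_minimal[OF double_coset_subset_closure[OF mat_monoid_Borel IH]])
    ultimately show ?thesis by auto
  next
    case False
    then have "v = w"
      using descents_of_no_ascent[OF v J] parabolic_perm_with_descents_unique less.prems w by blast
    then show ?thesis using perm_mat_in_closure_double_coset[OF mat_monoid_Borel] by simp
  qed
qed

lemma longest_in_closure_opp:
  assumes w: "w \<in> parabolic_perms n J" "J \<subseteq> descents n w"
  shows "v \<in> parabolic_perms n J \<Longrightarrow> perm_mat n w \<in> mat_closure n (double_coset (Borel_minus n) n v)"
proof (induction "ascents n v" arbitrary: v rule: less_induct)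
  case less
  have J: "J \<subseteq> {1..<n}" using w(2) unfolding descents_def by auto
  have v: "v permutes {0..<n}" using less.prems unfolding parabolic_perms_def by auto
  show ?case
  proof (cases "\<exists>k\<in>J. v (k - 1) < v k")
    case True
    then obtain k where k: "k \<in> J" "0 < k" "k < n" "v (k - 1) < v k" using J by auto
    define u where "u = v \<circ> simple_refl k"
    have uS: "u \<in> parabolic_perms n J"
      unfolding u_def by (rule parabolic_perms_comp_simple_refl[OF less.prems k(1-3)])
    have "ascents n u < ascents n v" unfolding u_def by (rule ascents_comp_simple_refl_less[OF k(2,3,4)])
    then have IH: "perm_mat n w \<in> mat_closure n (double_coset (Borel_minus n) n u)" using less.hyps uS by blast
    have "perm_mat n u \<in> mat_closure n (double_coset (Borel_minus n) n v)"
      unfolding u_def using k permutes_less[OF v, of k]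
      by (intro perm_mat_comp_simple_refl_in_closure[OF mat_monoid_Borel_minus v k(2,3)] transvection_Borel_minus)
        auto
    then have "mat_closure n (double_coset (Borel_minus n) n u) \<subseteq> mat_closure n (double_coset (Borel_minus n) n v)"
      by (rule mat_closure_minimal[OF double_coset_subset_closure[OF mat_monoid_Borel_minus]])
    then show ?thesis using IH by blast
  next
    case False
    then have "v = w"
      using descents_of_no_ascent[OF v J] parabolic_perm_with_descents_unique less.prems w by blast
    then show ?thesis using perm_mat_in_closure_double_coset[OF mat_monoid_Borel_minus] by simp
  qed
qed

section \<open>Permutations of Bruhat cells meeting the Peterson variety\<close>

text \<open>The condition that \<open>g\<^sup>-\<^sup>1 N g \<in> H\<^sub>J\<close> imposes on the permutation \<open>u\<close> of a cell \<open>L P\<^sub>u U\<close>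
  containing \<open>g\<close>: a value \<open>u a\<close> and its successor \<open>u b = u a + 1\<close> occur in reversed order
  \<open>b < a\<close> only if \<open>a = b + 1 \<in> J\<close>.\<close>

definition hessenberg_perm :: "nat \<Rightarrow> nat set \<Rightarrow> (nat \<Rightarrow> nat) \<Rightarrow> bool" where
  "hessenberg_perm n J u \<longleftrightarrow>
    (\<forall>a b. a < n \<longrightarrow> b < n \<longrightarrow> u b = Suc (u a) \<longrightarrow> b < a \<longrightarrow> a = Suc b \<and> a \<in> J)"

text \<open>If \<open>u\<close> moves some \<open>j < i\<close> to \<open>u j \<ge> i\<close>, let \<open>v\<close> be the largest value missing from
  \<open>u ` {0..<i}\<close> below its maximum. Then \<open>v + 1 = u a'\<close> with \<open>a' < i\<close> and \<open>v = u b'\<close> with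
  \<open>b' \<ge> i\<close>, so the Hessenberg condition forces \<open>(a', b') = (i - 1, i)\<close>, a descent at \<open>i\<close>.\<close>

lemma hessenberg_perm_ascent_preserves_initial:
  assumes u: "u permutes {0..<n}" and hess: "hessenberg_perm n J u" and i: "0 < i" "i < n"
    and ascent: "u (i - 1) < u i"
  shows "preserves_initial i u"
proof (rule ccontr)
  assume "\<not> preserves_initial i u"
  then obtain j where j: "j < i" "i \<le> u j" unfolding preserves_initial_def by auto
  define A where "A = u ` {0..<i}"
  have finA: "finite A" unfolding A_def by simp
  have cardA: "card A = i" unfolding A_def using card_image[OF permutes_inj_on[OF u]] by simp
  define x where "x = Max A"
  have xA: "x \<in> A" unfolding x_def using finA j by (intro Max_in) (auto simp: A_def)
  have "u j \<le> x" unfolding x_def using j finA by (intro Max_ge) (auto simp: A_def)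
  then have xge: "i \<le> x" using j by simp
  have xn: "x < n" using xA i permutes_less[OF u] unfolding A_def by auto
  have "\<exists>v<x. v \<notin> A"
  proof (rule ccontr)
    assume "\<not> (\<exists>v<x. v \<notin> A)"
    then have "{0..x} \<subseteq> A" using xA by (auto simp: le_less)
    then have "card {0..x} \<le> card A" using finA card_mono by blast
    then show False using cardA xge by simp
  qed
  define V where "V = {v. v < x \<and> v \<notin> A}"
  have finV: "finite V" "V \<noteq> {}" unfolding V_def using \<open>\<exists>v<x. v \<notin> A\<close> by auto
  define v where "v = Max V"
  have vV: "v < x" "v \<notin> A" using Max_in[OF finV] unfolding v_def V_def by auto
  have "Suc v \<in> A"
  proof (rule ccontr)
    assume "Suc v \<notin> A"
    then have "Suc v \<in> V" using xA vV unfolding V_def by (cases "Suc v = x") auto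
    then show False using Max_ge[OF finV(1)] unfolding v_def by fastforce
  qed
  then obtain a' where a': "a' < i" "u a' = Suc v" unfolding A_def by auto
  define b' where "b' = inv_into UNIV u v"
  have b': "b' < n" "u b' = v"
    unfolding b'_def using permutes_inv_less[OF u] vV xn permutes_inverses[OF u] by auto
  have "i \<le> b'" using vV b' unfolding A_def by (metis atLeastLessThan_iff image_eqI le0 not_le)
  then have "b' = Suc a'" using hess b' a' i unfolding hessenberg_perm_def by auto
  then have "a' = i - 1" "b' = i" using a' \<open>i \<le> b'\<close> by auto
  then show False using ascent a' b' by simp
qed

lemma hessenberg_perm_descents:
  assumes u: "u permutes {0..<n}" and hess: "hessenberg_perm n J u"
  shows "descents n u \<subseteq> J"
proof
  fix k assume "k \<in> descents n u"
  then have k: "0 < k" "k < n" and desc: "u k < u (k - 1)" unfolding descents_def by auto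
  define Z where "Z = {z. u k < z \<and> z \<le> u (k - 1) \<and> inv_into UNIV u z < k}"
  have "u (k - 1) \<in> Z" unfolding Z_def using desc permutes_inverses[OF u] k by auto
  define z where "z = (LEAST z. z \<in> Z)"
  have "z \<in> Z" unfolding z_def using \<open>u (k - 1) \<in> Z\<close> by (rule LeastI)
  then have z: "u k < z" "z \<le> u (k - 1)" "inv_into UNIV u z < k" unfolding Z_def by auto
  then obtain z' where z': "z = Suc z'" by (cases z) auto
  have "u (k - 1) < n" using permutes_less[OF u] k by simp
  then have zn: "z < n" using z by simp
  have "k \<le> inv_into UNIV u z'"
  proof (cases "z' = u k")
    case True then show ?thesis using permutes_inverses[OF u] by simp
  next
    case False
    moreover have "z' \<notin> Z"
    proof
      assume "z' \<in> Z"
      then have "z \<le> z'" unfolding z_def by (rule Least_le)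
      then show False using z' by simp
    qed
    ultimately show ?thesis using z z' unfolding Z_def by auto
  qed
  moreover have "inv_into UNIV u z' < n" "inv_into UNIV u z < n"
    using permutes_inv_less[OF u] zn z' by auto
  moreover have "u (inv_into UNIV u z) = Suc (u (inv_into UNIV u z'))"
    using permutes_inverses[OF u] z' by simp
  moreover have "inv_into UNIV u z < inv_into UNIV u z'" using z(3) \<open>k \<le> inv_into UNIV u z'\<close> by simp
  ultimately have "inv_into UNIV u z' = Suc (inv_into UNIV u z) \<and> inv_into UNIV u z' \<in> J"
    using hess unfolding hessenberg_perm_def by blast
  then have "inv_into UNIV u z' = k" "inv_into UNIV u z' \<in> J"
    using z(3) \<open>k \<le> inv_into UNIV u z'\<close> by auto
  then show "k \<in> J" by simp
qed

lemma hessenberg_perm_in_parabolic_perms: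
  assumes u: "u permutes {0..<n}" and hess: "hessenberg_perm n J u"
  shows "u \<in> parabolic_perms n (descents n u)"
proof -
  have "preserves_initial m u" if m: "m \<in> {1..<n} - descents n u" for m
  proof (rule hessenberg_perm_ascent_preserves_initial[OF u hess])
    have "u m \<noteq> u (m - 1)" using m permutes_inj[OF u] unfolding inj_def by force
    then show "u (m - 1) < u m" using m unfolding descents_def by auto
  qed (use m in auto)
  then show ?thesis using u unfolding parabolic_perms_def by auto
qed

lemma Hess_conj_Borel:
  assumes U: "U \<in> Borel n" and U': "U' \<in> Borel n" and M: "M \<in> Hess n J"
  shows "U * M * U' \<in> Hess n J"
proof -
  have c: "U \<in> carrier_mat n n" "U' \<in> carrier_mat n n" "M \<in> carrier_mat n n"
    using U U' M Borel_carrier unfolding Hess_def by auto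
  have "(U * M * U') $$ (r, c) = 0" if rc: "r < n" "c < r" and not_J: "\<not> (r = c + 1 \<and> r \<in> J)" for r c
  proof -
    have "U $$ (r, k) * M $$ (k, l) * U' $$ (l, c) = 0" if "k < n" "l < n" for k l
    proof (cases "r \<le> k \<and> l \<le> c")
      case True
      then have "l < k" using rc by simp
      then have "M $$ (k, l) = 0 \<or> (k = l + 1 \<and> k \<in> J)" using M that unfolding Hess_def by auto
      moreover have "k = l + 1 \<Longrightarrow> k = r \<and> r = c + 1" using True rc by linarith
      ultimately show ?thesis using not_J by auto
    next
      case False
      then have "U $$ (r, k) = 0 \<or> U' $$ (l, c) = 0" using U U' that rc unfolding Borel_def
        by (auto simp: not_le)
      then show ?thesis by auto
    qed
    then have "(\<Sum>k<n. \<Sum>l<n. U $$ (r, k) * M $$ (k, l) * U' $$ (l, c)) = 0"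
      by (intro sum.neutral ballI) auto
    then show ?thesis using index_mult_mat3_sum[OF c(1,3,2) rc(1)] rc by simp
  qed
  then show ?thesis using c unfolding Hess_def by auto
qed

lemma Njor_carrier [simp]: "Njor n \<in> carrier_mat n n"
  unfolding Njor_def by simp

lemma block_upper_Njor: "block_upper n m (Njor n)"
  unfolding block_upper_def Njor_def by auto

lemma Hess_of_block_upper:
  assumes M: "M \<in> Hess n {1..<n}" and block: "\<And>m. m \<in> {1..<n} - J \<Longrightarrow> block_upper n m M"
  shows "M \<in> Hess n J"
  unfolding Hess_def
proof (intro CollectI conjI allI impI)
  show "M \<in> carrier_mat n n" using M unfolding Hess_def by auto
  fix r c assume rc: "r < n" "c < r"
  show "M $$ (r, c) = 0 \<or> (r = c + 1 \<and> r \<in> J)"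
  proof (cases "r = c + 1 \<and> r \<notin> J")
    case True
    then have "block_upper n r M" using rc by (intro block) auto
    then show ?thesis using rc True unfolding block_upper_def by auto
  qed (use M rc in \<open>auto simp: Hess_def\<close>)
qed

lemma index_Njor_mult:
  assumes "L \<in> carrier_mat n n" "k < n" "j < n"
  shows "(Njor n * L) $$ (k, j) = (if Suc k < n then L $$ (Suc k, j) else 0)"
proof -
  have "(Njor n * L) $$ (k, j) = (\<Sum>l<n. Njor n $$ (k, l) * L $$ (l, j))"
    using assms by (intro index_mult_mat_sum) auto
  also have "\<dots> = (\<Sum>l<n. if l = Suc k then L $$ (Suc k, j) else 0)"
    using assms by (intro sum.cong refl) (auto simp: Njor_def)
  finally show ?thesis by simp
qed

lemma triangular_conj_Njor_superdiag:
  assumes L: "L \<in> Borel n \<union> Borel_minus n" and i: "Suc i < n"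
  shows "(minv n L * Njor n * L) $$ (i, Suc i) \<noteq> 0"
proof -
  define Li where "Li = minv n L"
  have LG: "L \<in> GL n" using L unfolding Borel_def Borel_minus_def by auto
  note Li = minv_inverse[OF LG, folded Li_def]
  have Lc: "L \<in> carrier_mat n n" using LG by (rule GL_carrier)
  have zero: "Li $$ (i, k) * L $$ (a, b) = 0"
    if "(k < i \<and> a < b) \<or> (i < k \<and> b < a)" "k < n" "a < n" "b < n" for k a b
  proof -
    consider "Li \<in> Borel n" "L \<in> Borel n" | "Li \<in> Borel_minus n" "L \<in> Borel_minus n"
      using L Borel_minv Borel_minus_minv unfolding Li_def by blast
    then show ?thesis
    proof cases
      case 1 then show ?thesis using that i unfolding Borel_def by auto
    next
      case 2 then show ?thesis using that i unfolding Borel_minus_def by auto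
    qed
  qed
  have "1 = (Li * L) $$ (i, i)" using Li i by simp
  also have "\<dots> = (\<Sum>k<n. Li $$ (i, k) * L $$ (k, i))" using Li Lc i by (intro index_mult_mat_sum) auto
  also have "\<dots> = Li $$ (i, i) * L $$ (i, i)"
    by (rule sum_eq_single) (use i zero in \<open>auto simp: neq_iff\<close>)
  finally have "Li $$ (i, i) \<noteq> 0" by auto
  moreover have "L $$ (Suc i, Suc i) \<noteq> 0"
    using L i Borel_diag_nonzero Borel_minus_diag_nonzero by blast
  moreover have "(Li * Njor n * L) $$ (i, Suc i) = (Li * (Njor n * L)) $$ (i, Suc i)"
    using assoc_mult_mat[OF Li(1) Njor_carrier Lc] by simp
  moreover have "\<dots> = (\<Sum>k<n. Li $$ (i, k) * (Njor n * L) $$ (k, Suc i))"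
    using Li Lc i mult_carrier_mat[OF Njor_carrier Lc] by (intro index_mult_mat_sum) auto
  moreover have "\<dots> = (\<Sum>k<n. Li $$ (i, k) * (if Suc k < n then L $$ (Suc k, Suc i) else 0))"
    using index_Njor_mult[OF Lc] i by (intro sum.cong refl) auto
  moreover have "\<dots> = Li $$ (i, i) * L $$ (Suc i, Suc i)"
    by (rule trans[OF sum_eq_single[of _ i]]) (use i zero in \<open>auto simp: neq_iff\<close>)
  ultimately show ?thesis unfolding Li_def by simp
qed

lemma conj_decomposition_intertwine:
  assumes L: "L \<in> GL n" and P: "P \<in> carrier_mat n n" and U: "U \<in> GL n" and N: "N \<in> carrier_mat n n"
    and g: "g \<in> GL n" and dec: "g = L * P * U"
  shows "minv n L * N * L * P = P * (U * (minv n g * N * g) * minv n U)"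
proof -
  define Li where "Li = minv n L"
  define gi where "gi = minv n g"
  define Ui where "Ui = minv n U"
  note mL = minv_inverse[OF L, folded Li_def] and mg = minv_inverse[OF g, folded gi_def]
    and mU = minv_inverse[OF U, folded Ui_def]
  note cs = GL_carrier[OF L] GL_carrier[OF U] GL_carrier[OF g] P N mL(1) mg(1) mU(1)
  have mc: "\<And>A B. A \<in> carrier_mat n n \<Longrightarrow> B \<in> carrier_mat n n \<Longrightarrow> A * B \<in> carrier_mat n n"
    by simp
  have "L * (P * (U * gi)) = g * gi" unfolding dec using cs
    by (simp add: assoc_mult_mat[of _ n n _ n _ n] mc)
  then have "L * (P * (U * gi)) = 1\<^sub>m n" using mg by simp
  then have "Li = Li * (L * (P * (U * gi)))" using mL by simp
  also have "\<dots> = (Li * L) * (P * (U * gi))"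
    using cs by (simp add: assoc_mult_mat[of _ n n _ n _ n] mc)
  finally have inv_L: "P * (U * gi) = Li" using mL cs by simp
  have "P * (U * (gi * N * g) * Ui) = P * (U * (gi * (N * (L * (P * (U * Ui))))))"
    unfolding dec using cs by (simp add: assoc_mult_mat[of _ n n _ n _ n] mc)
  also have "\<dots> = (P * (U * gi)) * (N * (L * P))"
    using mU cs by (simp add: assoc_mult_mat[of _ n n _ n _ n] mc)
  also have "\<dots> = Li * N * L * P" unfolding inv_L using cs by (simp add: assoc_mult_mat[of _ n n _ n _ n] mc)
  finally show ?thesis unfolding Li_def gi_def Ui_def by simp
qed

lemma hessenberg_perm_of_decomposition:
  assumes g: "g \<in> GL n" and dec: "g = L * perm_mat n u * U" and u: "u permutes {0..<n}"
    and L: "L \<in> Borel n \<union> Borel_minus n" and U: "U \<in> Borel n"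
    and M: "minv n g * Njor n * g \<in> Hess n J"
  shows "hessenberg_perm n J u"
proof -
  define P where "P = perm_mat n u"
  define Y where "Y = minv n L * Njor n * L"
  define Z where "Z = U * (minv n g * Njor n * g) * minv n U"
  have Z: "Z \<in> Hess n J" unfolding Z_def by (rule Hess_conj_Borel[OF U Borel_minv[OF U] M])
  have LG: "L \<in> GL n" using L unfolding Borel_def Borel_minus_def by auto
  have YP: "Y * P = P * Z"
    unfolding Y_def Z_def P_def
    using U dec g LG by (intro conj_decomposition_intertwine) (auto simp: Borel_def)
  have Yc: "Y \<in> carrier_mat n n"
    unfolding Y_def using mult_carrier_mat[OF mult_carrier_mat[OF minv_inverse(1)[OF LG] Njor_carrier] GL_carrier[OF LG]] .
  show ?thesis unfolding hessenberg_perm_def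
  proof (intro allI impI)
    fix a b assume ab: "a < n" "b < n" "u b = Suc (u a)" "b < a"
    have ua: "u a < n" using permutes_less[OF u ab(1)] .
    have "Suc (u a) < n" using ab permutes_less[OF u ab(2)] by simp
    then have "Y $$ (u a, u b) \<noteq> 0"
      using triangular_conj_Njor_superdiag[OF L] ab(3) unfolding Y_def by simp
    moreover have "(Y * P) $$ (u a, b) = Y $$ (u a, u b)"
      unfolding P_def by (rule perm_mat_mult_index_right[OF u Yc]) (use ua ab in auto)
    moreover have "(P * Z) $$ (u a, b) = Z $$ (a, b)"
      using perm_mat_mult_index_left[OF u, of Z "u a" b] ua ab Z permutes_inverses[OF u]
      unfolding P_def Hess_def by auto
    ultimately have "Z $$ (a, b) \<noteq> 0" using YP by simp
    then show "a = Suc b \<and> a \<in> J" using Z ab unfolding Hess_def by auto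
  qed
qed

section \<open>Leading principal minors on double cosets\<close>

definition lead_submat :: "nat \<Rightarrow> complex mat \<Rightarrow> complex mat" where
  "lead_submat i A = mat i i (\<lambda>(r, c). A $$ (r, c))"

lemma lead_minor_eq_det: "lead_minor i A = det (lead_submat i A)"
  unfolding lead_minor_def lead_submat_def by simp

lemma lead_submat_mult:
  assumes A: "A \<in> carrier_mat n n" and B: "B \<in> carrier_mat n n" and i: "i \<le> n"
    and block: "block_lower n i A \<or> block_upper n i B"
  shows "lead_submat i (A * B) = lead_submat i A * lead_submat i B"
proof (rule eq_matI)
  fix r c assume "r < dim_row (lead_submat i A * lead_submat i B)" "c < dim_col (lead_submat i A * lead_submat i B)"
  then have rc: "r < i" "c < i" unfolding lead_submat_def by auto
  have "(A * B) $$ (r, c) = (\<Sum>l<n. A $$ (r, l) * B $$ (l, c))"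
    using A B rc i by (intro index_mult_mat_sum) auto
  also have "\<dots> = (\<Sum>l<i. A $$ (r, l) * B $$ (l, c))"
    by (rule sum.mono_neutral_right) (use i block rc in \<open>auto simp: block_lower_def block_upper_def\<close>)
  also have "\<dots> = (lead_submat i A * lead_submat i B) $$ (r, c)"
    using rc by (subst index_mult_mat_sum[of _ i]) (auto simp: lead_submat_def)
  finally show "lead_submat i (A * B) $$ (r, c) = (lead_submat i A * lead_submat i B) $$ (r, c)"
    using rc by (simp add: lead_submat_def)
qed (auto simp: lead_submat_def)

lemma det_lead_submat_Borel_minus: "L \<in> Borel_minus n \<Longrightarrow> i \<le> n \<Longrightarrow> det (lead_submat i L) \<noteq> 0"
  using lower_triangular_GL[of "lead_submat i L" i] Borel_minus_diag_nonzero[of L n]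
  by (auto simp: lead_submat_def Borel_minus_def GL_iff_det)

lemma det_lead_submat_Borel: "U \<in> Borel n \<Longrightarrow> i \<le> n \<Longrightarrow> det (lead_submat i U) \<noteq> 0"
  using upper_triangular_GL[of "lead_submat i U" i] Borel_diag_nonzero[of U n]
  by (auto simp: lead_submat_def Borel_def GL_iff_det)

lemma det_lead_submat_perm_mat_eq_0_iff:
  assumes u: "u permutes {0..<n}" and i: "i \<le> n"
  shows "det (lead_submat i (perm_mat n u)) = 0 \<longleftrightarrow> \<not> preserves_initial i u"
proof
  assume "\<not> preserves_initial i u"
  then obtain j where j: "j < i" "i \<le> u j" unfolding preserves_initial_def by auto
  show "det (lead_submat i (perm_mat n u)) = 0"
    by (rule det_eq_0_of_zero_col[of _ i j]) (use i j in \<open>auto simp: lead_submat_def\<close>)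
next
  assume "det (lead_submat i (perm_mat n u)) = 0"
  moreover have "det (lead_submat i (perm_mat n u)) \<noteq> 0" if c: "preserves_initial i u"
  proof -
    define u' where "u' = (\<lambda>j. if j < i then u j else j)"
    have inj: "inj_on u' {0..<i}" using permutes_inj[OF u] unfolding u'_def inj_on_def inj_def by auto
    have "u' ` {0..<i} \<subseteq> {0..<i}" using c unfolding u'_def preserves_initial_def by auto
    then have "bij_betw u' {0..<i} {0..<i}" using endo_inj_surj[OF _ _ inj] inj by (simp add: bij_betw_def)
    then have "u' permutes {0..<i}" by (rule bij_imp_permutes) (auto simp: u'_def)
    moreover have "lead_submat i (perm_mat n u) = perm_mat i u'"
      by (rule eq_matI) (use i in \<open>auto simp: lead_submat_def u'_def\<close>)
    ultimately show ?thesis using perm_mat_GL GL_det_nonzero by metis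
  qed
  ultimately show "\<not> preserves_initial i u" by blast
qed

lemma lead_minor_LPU_eq_0_iff:
  assumes L: "L \<in> Borel_minus n" and u: "u permutes {0..<n}" and U: "U \<in> Borel n" and i: "i \<le> n"
  shows "lead_minor i (L * perm_mat n u * U) = 0 \<longleftrightarrow> \<not> preserves_initial i u"
proof -
  have Lc: "L \<in> carrier_mat n n" and Uc: "U \<in> carrier_mat n n"
    using L U Borel_carrier Borel_minus_carrier by auto
  have "lead_submat i (L * perm_mat n u * U) = lead_submat i (L * perm_mat n u) * lead_submat i U"
    using U Lc Uc i by (intro lead_submat_mult) (auto simp: Borel_iff_block_upper)
  also have "lead_submat i (L * perm_mat n u) = lead_submat i L * lead_submat i (perm_mat n u)"
    using L Lc i by (intro lead_submat_mult) (auto simp: Borel_minus_iff_block_lower)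
  moreover have c: "lead_submat i L \<in> carrier_mat i i" "lead_submat i (perm_mat n u) \<in> carrier_mat i i"
    "lead_submat i U \<in> carrier_mat i i"
    unfolding lead_submat_def by auto
  ultimately have "lead_minor i (L * perm_mat n u * U) =
      det (lead_submat i L) * det (lead_submat i (perm_mat n u)) * det (lead_submat i U)"
    unfolding lead_minor_eq_det using det_mult[OF mult_carrier_mat[OF c(1,2)] c(3)] det_mult[OF c(1,2)]
    by simp
  then show ?thesis
    using det_lead_submat_Borel_minus[OF L i] det_lead_submat_Borel[OF U i]
      det_lead_submat_perm_mat_eq_0_iff[OF u i]
    by simp
qed

definition lead_minor_fun :: "nat \<Rightarrow> (nat \<Rightarrow> nat \<Rightarrow> complex) \<Rightarrow> complex" where
  "lead_minor_fun i f = (\<Sum>p\<in>{p. p permutes {0..<i}}. signof p * (\<Prod>r = 0..<i. f r (p r)))"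

lemma continuous_on_lead_minor_fun: "continuous_on UNIV (lead_minor_fun i)"
  unfolding lead_minor_fun_def by (intro continuous_intros continuous_on_entry)

lemma lead_minor_eq_lead_minor_fun:
  assumes X: "X \<in> carrier_mat n n" and i: "i \<le> n"
  shows "lead_minor i X = lead_minor_fun i (mat_fun X)"
proof -
  have c: "lead_submat i X \<in> carrier_mat i i" unfolding lead_submat_def by simp
  have "lead_submat i X $$ (r, p r) = mat_fun X r (p r)" if "p permutes {0..<i}" "r \<in> {0..<i}" for p r
  proof -
    have "p r < i" using permutes_less[OF that(1)] that(2) by simp
    then show ?thesis using that(2) i X unfolding lead_submat_def mat_fun_def by auto
  qed
  then show ?thesis
    unfolding lead_minor_eq_det det_def'[OF c] lead_minor_fun_def by (auto intro!: sum.cong prod.cong)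
qed

lemma mat_closure_closed_property:
  assumes "X \<in> mat_closure n S" "closed F" "\<And>Y. Y \<in> S \<Longrightarrow> mat_fun Y \<in> F"
  shows "mat_fun X \<in> F"
  using assms closure_minimal[of "mat_fun ` S" F] unfolding mat_closure_def by auto

lemma closed_block_upper_funs:
  "closed {f :: nat \<Rightarrow> nat \<Rightarrow> complex. \<forall>k c. c < m \<longrightarrow> m \<le> k \<longrightarrow> k < n \<longrightarrow> f k c = 0}"
proof -
  have "closed {f :: nat \<Rightarrow> nat \<Rightarrow> complex. c < m \<longrightarrow> m \<le> k \<longrightarrow> k < n \<longrightarrow> f k c = 0}" for k c
    using closed_Collect_eq[OF continuous_on_entry continuous_on_const, of k c 0] by (cases "c < m \<and> m \<le> k \<and> k < n") auto
  then have "closed (\<Inter>k. \<Inter>c. {f :: nat \<Rightarrow> nat \<Rightarrow> complex. c < m \<longrightarrow> m \<le> k \<longrightarrow> k < n \<longrightarrow> f k c = 0})"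
    by (intro closed_INT) auto
  moreover have "(\<Inter>k. \<Inter>c. {f :: nat \<Rightarrow> nat \<Rightarrow> complex. c < m \<longrightarrow> m \<le> k \<longrightarrow> k < n \<longrightarrow> f k c = 0}) =
      {f. \<forall>k c. c < m \<longrightarrow> m \<le> k \<longrightarrow> k < n \<longrightarrow> f k c = 0}" by auto
  ultimately show ?thesis by simp
qed

section \<open>The zero loci\<close>

lemma zero_phi_subset_schubert:
  assumes J: "J \<subseteq> {1..<n}"
  shows "zero_phi n J \<subseteq> Pet n \<inter> schubert n (longest n J)"
proof
  fix g assume "g \<in> zero_phi n J"
  then have Pet: "g \<in> Pet n" and M: "minv n g * Njor n * g \<in> Hess n J" unfolding zero_phi_def by auto
  then have g: "g \<in> GL n" unfolding Pet_def by auto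
  then obtain U1 v U2 where U1: "U1 \<in> Borel n" and v: "v permutes {0..<n}" and U2: "U2 \<in> Borel n"
    and dec: "g = U1 * perm_mat n v * U2"
    by (rule Bruhat_decomposition)
  have "hessenberg_perm n J v" using hessenberg_perm_of_decomposition[OF g dec v _ U2 M] U1 by blast
  then have "v \<in> parabolic_perms n J"
    using hessenberg_perm_in_parabolic_perms[OF v] hessenberg_perm_descents[OF v]
      parabolic_perms_mono by blast
  then have "perm_mat n v \<in> mat_closure n (double_coset (Borel n) n (longest n J))"
    by (rule perm_mat_in_closure_longest[OF longest_in_parabolic_perms[OF J] longest_descents[OF J]])
  then show "g \<in> Pet n \<inter> schubert n (longest n J)"
    using double_coset_closure_mult[OF mat_monoid_Borel _ U1 U2] Pet g dec by (simp add: schubert_eq)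
qed

lemma Pet_schubert_subset_zero_phi:
  assumes J: "J \<subseteq> {1..<n}"
  shows "Pet n \<inter> schubert n (longest n J) \<subseteq> zero_phi n J"
proof
  fix g assume g: "g \<in> Pet n \<inter> schubert n (longest n J)"
  let ?w = "longest n J"
  have gG: "g \<in> GL n" and closure: "g \<in> mat_closure n (double_coset (Borel n) n ?w)"
    using g by (auto simp: schubert_eq)
  have gc: "g \<in> carrier_mat n n" using GL_carrier[OF gG] .
  have block_g: "block_upper n m g" if m: "m \<in> {1..<n} - J" for m
  proof -
    let ?F = "{f :: nat \<Rightarrow> nat \<Rightarrow> complex. \<forall>k c. c < m \<longrightarrow> m \<le> k \<longrightarrow> k < n \<longrightarrow> f k c = 0}"
    have w: "preserves_initial m ?w" using longest_in_parabolic_perms[OF J] m by (auto simp: parabolic_perms_def)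
    have "mat_fun Y \<in> ?F" if Y: "Y \<in> double_coset (Borel n) n ?w" for Y
    proof -
      obtain b1 b2 where b: "b1 \<in> Borel n" "b2 \<in> Borel n" "Y = b1 * perm_mat n ?w * b2"
        using Y unfolding double_coset_def by auto
      have c: "b1 \<in> carrier_mat n n" "b2 \<in> carrier_mat n n" using b Borel_carrier by auto
      have "block_upper n m Y" unfolding b(3)
        using b c block_upper_perm_mat[OF w] by (intro block_upper_mult) (auto simp: Borel_iff_block_upper)
      then show ?thesis using b c unfolding block_upper_def mat_fun_def by auto
    qed
    then have "mat_fun g \<in> ?F" by (rule mat_closure_closed_property[OF closure closed_block_upper_funs])
    then show ?thesis using gc unfolding block_upper_def mat_fun_def by auto
  qed
  note mg = minv_inverse[OF gG]
  have "minv n g * Njor n * g \<in> Hess n J"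
  proof (rule Hess_of_block_upper)
    show "minv n g * Njor n * g \<in> Hess n {1..<n}" using g unfolding Pet_def by auto
    fix m assume "m \<in> {1..<n} - J"
    then show "block_upper n m (minv n g * Njor n * g)"
      using block_upper_right_inverse[OF gc mg(1) mg(3) block_g] block_upper_Njor block_g mg(1) gc
      by (intro block_upper_mult) auto
  qed
  then show "g \<in> zero_phi n J" using g unfolding zero_phi_def by auto
qed

lemma zero_psi_subset_opp_schubert:
  assumes J: "J \<subseteq> {1..<n}"
  shows "zero_psi n J \<subseteq> Pet n \<inter> opp_schubert n (longest n J)"
proof
  fix g assume "g \<in> zero_psi n J"
  then have Pet: "g \<in> Pet n" and minors: "\<And>i. i \<in> J \<Longrightarrow> lead_minor i g = 0"
    unfolding zero_psi_def by auto
  have g: "g \<in> GL n" and M: "minv n g * Njor n * g \<in> Hess n {1..<n}" using Pet unfolding Pet_def by auto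
  obtain L u U where L: "L \<in> Borel_minus n" and u: "u permutes {0..<n}" and U: "U \<in> Borel n"
    and dec: "g = L * perm_mat n u * U"
    using LPU_decomposition[OF g] by blast
  have "hessenberg_perm n {1..<n} u" using hessenberg_perm_of_decomposition[OF g dec u _ U M] L by blast
  then have u_par: "u \<in> parabolic_perms n (descents n u)" by (rule hessenberg_perm_in_parabolic_perms[OF u])
  have "J \<subseteq> descents n u"
  proof
    fix i assume i: "i \<in> J"
    then have "i \<le> n" using J by auto
    then have "\<not> preserves_initial i u"
      using minors[OF i] lead_minor_LPU_eq_0_iff[OF L u U] dec by auto
    then show "i \<in> descents n u" using u_par i J unfolding parabolic_perms_def by auto
  qed
  then have "longest n J \<in> parabolic_perms n (descents n u)"
    using longest_in_parabolic_perms[OF J] parabolic_perms_mono by blast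
  then have "perm_mat n u \<in> mat_closure n (double_coset (Borel_minus n) n (longest n J))"
    by (rule longest_in_closure_opp[OF u_par order_refl])
  then show "g \<in> Pet n \<inter> opp_schubert n (longest n J)"
    using double_coset_closure_mult[OF mat_monoid_Borel_minus _ L U] Pet g dec by (simp add: opp_schubert_eq)
qed

lemma Pet_opp_schubert_subset_zero_psi:
  assumes J: "J \<subseteq> {1..<n}"
  shows "Pet n \<inter> opp_schubert n (longest n J) \<subseteq> zero_psi n J"
proof
  fix g assume g: "g \<in> Pet n \<inter> opp_schubert n (longest n J)"
  let ?w = "longest n J"
  have w: "?w \<in> parabolic_perms n J" and desc: "J \<subseteq> descents n ?w"
    using longest_in_parabolic_perms[OF J] longest_descents[OF J] .
  have pw: "?w permutes {0..<n}" using w unfolding parabolic_perms_def by auto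
  have gG: "g \<in> GL n" and closure: "g \<in> mat_closure n (double_coset (Borel_minus n) n ?w)"
    using g by (auto simp: opp_schubert_eq)
  have gc: "g \<in> carrier_mat n n" using GL_carrier[OF gG] .
  have "lead_minor i g = 0" if i: "i \<in> J" for i
  proof -
    have i': "0 < i" "i < n" using i J by auto
    have "\<not> preserves_initial i ?w"
    proof
      assume "preserves_initial i ?w"
      then have "?w (i - 1) < i" "i \<le> ?w i"
        using i' preserves_initial_ge[OF pw] unfolding preserves_initial_def by auto
      moreover have "?w i < ?w (i - 1)" using desc i unfolding descents_def by auto
      ultimately show False by simp
    qed
    have "mat_fun Y \<in> {f. lead_minor_fun i f = 0}" if Y: "Y \<in> double_coset (Borel_minus n) n ?w" for Y
    proof -
      obtain b1 b2 where b: "b1 \<in> Borel_minus n" "b2 \<in> Borel n" "Y = b1 * perm_mat n ?w * b2"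
        using Y unfolding double_coset_def by auto
      have "Y \<in> carrier_mat n n"
        unfolding b(3) using Borel_carrier[OF b(2)] Borel_minus_carrier[OF b(1)] by (intro mult_carrier_mat) auto
      then show ?thesis
        using lead_minor_LPU_eq_0_iff[OF b(1) pw b(2), of i] \<open>\<not> preserves_initial i ?w\<close>
          lead_minor_eq_lead_minor_fun[of Y n i] i' b(3)
        by simp
    qed
    then have "mat_fun g \<in> {f. lead_minor_fun i f = 0}"
      using closed_Collect_eq[OF continuous_on_lead_minor_fun continuous_on_const]
      by (intro mat_closure_closed_property[OF closure]) auto
    then show ?thesis using lead_minor_eq_lead_minor_fun[OF gc] i' by simp
  qed
  then show "g \<in> zero_psi n J" using g unfolding zero_psi_def by auto
qed

theorem proposition3p12:
  fixes n :: nat and J :: "nat set"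
  assumes "J \<subseteq> {1..<n}"
  shows "zero_phi n J = Pet n \<inter> schubert n (longest n J)
       \<and> zero_psi n J = Pet n \<inter> opp_schubert n (longest n J)"
  using zero_phi_subset_schubert[OF assms] Pet_schubert_subset_zero_phi[OF assms]
    zero_psi_subset_opp_schubert[OF assms] Pet_opp_schubert_subset_zero_psi[OF assms]
  by blast

end
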